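(* Let $i\ge1$. Then $\tilde\Delta^{i-1}\circ F_i$ is the identity of $Prim({\cal H}_R)^{\otimes i}$, and $\tilde\Delta^{k}\circ F_i=0$ for every $k>i-1$. Moreover $F_i$ is injective, and the sum $\mathbb{Q}1+\sum_{i=1}^{\infty}Im(F_i)$ is direct.
   Context: A rooted tree is a finite connected and simply connected graph with a distinguished vertex (the root), edges oriented away from the root; its weight is its number of vertices. ${\cal H}_R$ is the commutative polynomial algebra over $\mathbb{Q}$ on the isomorphism classes of rooted trees; monomials are forests ($1$ is the empty forest), the weight of a forest is its total number of vertices. An admissible cut $C$ of a tree $t$ is a nonempty set of edges such that every path from the root to a vertex contains at most one edge of $C$; removing them gives a forest in which $R^C(t)$ is the tree containing the root and $P^C(t)$ the product of the others. ${\cal H}_R$ is a Hopf algebra with coproduct the algebra morphism $\Delta$ with $\Delta(t)=1\otimes t+t\otimes1+\sum_C P^C(t)\otimes R^C(t)$ on trees, unit $\eta$ and counit $\varepsilon$ ($\varepsilon(1)=1$, $\varepsilon(t)=0$ on trees). $\tilde\Delta(x):=\Delta(x)-1\otimes x-x\otimes1$; $Prim({\cal H}_R)=\ker\tilde\Delta$. Set $\tilde\Delta^0=Id-\eta\circ\varepsilon$, $\tilde\Delta^1=\tilde\Delta$, $\tilde\Delta^k=(\tilde\Delta^{k-1}\otimes Id)\circ\tilde\Delta$, a map ${\cal H}_R\to{\cal H}_R^{\otimes(k+1)}$. For forests $M,N$: $M\top N=0$ if $N=1$, and otherwise $M\top N=\frac{1}{weight(N)}\sum_v N_v$, where $v$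 runs over vertices of $N$ and $N_v$ is obtained from $N$ by attaching every tree of $M$ to $v$ (an edge from $v$ to each root of $M$); extended bilinearly. $p_i\top\cdots\top p_1:=(p_i\top\cdots\top p_2)\top p_1$. $F_i:Prim({\cal H}_R)^{\otimes i}\to{\cal H}_R$ is the linear map with $F_i(p_i\otimes\cdots\otimes p_1)=p_i\top\cdots\top p_1$. *)

theory Defs
  imports Complex_Main "HOL-Library.Multiset" "HOL-Library.Poly_Mapping"
begin

text \<open>Concrete (planar) rooted trees: a root with an ordered list of children.
  Vertices are addressed by positions (paths of child indices); the root is [].\<close>
datatype ltree = LNode "ltree list"

primrec children :: "ltree \<Rightarrow> ltree list" where
  "children (LNode ts) = ts"

text \<open>Isomorphism classes of rooted trees: unordered trees.\<close>
datatype tree = Node "tree multiset"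

fun iso :: "ltree \<Rightarrow> tree" where
  "iso (LNode ts) = Node (mset (map iso ts))"

definition rep :: "tree \<Rightarrow> ltree" where
  "rep t = (SOME l. iso l = t)"

type_synonym forest = "tree multiset"

primrec valid :: "ltree \<Rightarrow> nat list \<Rightarrow> bool" where
  "valid t [] = True"
| "valid t (i # p) = (i < length (children t) \<and> valid (children t ! i) p)"

definition pos :: "ltree \<Rightarrow> nat list set" where
  "pos t = {p. valid t p}"

primrec sub :: "ltree \<Rightarrow> nat list \<Rightarrow> ltree" where
  "sub t [] = t"
| "sub t (i # p) = sub (children t ! i) p"

primrec graft :: "ltree list \<Rightarrow> ltree \<Rightarrow> nat list \<Rightarrow> ltree" where
  "graft ms t [] = LNode (children t @ ms)"
| "graft ms t (i # p) = LNode ((children t)[i := graft ms (children t ! i) p])"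

text \<open>Removing the subtrees hanging below the cut edges C (an edge is identified
  with the position of its target vertex).\<close>
function prune :: "nat list set \<Rightarrow> ltree \<Rightarrow> ltree" where
  "prune C (LNode ts) = LNode (concat (map (\<lambda>(i, t).
      if [i] \<in> C then [] else [prune {p. i # p \<in> C} t]) (zip [0..<length ts] ts)))"
  by pat_completeness auto
termination
proof (relation "measure (size \<circ> snd)", goal_cases)
  case 1 then show ?case by simp
next
  case (2 C ts x i t)
  then have "t \<in> set ts" by (auto dest: set_zip_rightD)
  then show ?case by (simp add: less_Suc_eq_le size_list_estimation')
qed

text \<open>Admissible cuts: nonempty sets of edges such that every root-to-vertex path
  contains at most one of them.\<close>
definition adm_cuts :: "ltree \<Rightarrow> nat list set set" where
  "adm_cuts l = {C. C \<noteq> {} \<and> C \<subseteq> pos l - {[]} \<and>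
      (\<forall>p\<in>C. \<forall>q\<in>C. (\<exists>r. q = p @ r) \<longrightarrow> p = q)}"

definition PC :: "nat list set \<Rightarrow> ltree \<Rightarrow> forest" where
  "PC C l = image_mset (\<lambda>p. iso (sub l p)) (mset_set C)"

definition RC :: "nat list set \<Rightarrow> ltree \<Rightarrow> tree" where
  "RC C l = iso (prune C l)"

definition weight :: "forest \<Rightarrow> nat" where
  "weight N = (\<Sum>t\<in>#N. card (pos (rep t)))"

text \<open>H_R = Q-vector space with basis the forests (product = disjoint union);
  H_R^{\<otimes>n} = finitely supported functions on lists of n forests.\<close>
type_synonym H = "forest \<Rightarrow>\<^sub>0 rat"
type_synonym T = "forest list \<Rightarrow>\<^sub>0 rat"

definition smul :: "rat \<Rightarrow> ('a \<Rightarrow>\<^sub>0 rat) \<Rightarrow> ('a \<Rightarrow>\<^sub>0 rat)" where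
  "smul c x = Poly_Mapping.map ((*) c) x"

definition qspan :: "('a \<Rightarrow>\<^sub>0 rat) set \<Rightarrow> ('a \<Rightarrow>\<^sub>0 rat) set" where
  "qspan S = {x. \<exists>(n::nat) (c::nat \<Rightarrow> rat) v. x = (\<Sum>j<n. smul (c j) (v j)) \<and> (\<forall>j<n. v j \<in> S)}"

definition embed :: "H \<Rightarrow> T" where
  "embed x = (\<Sum>F\<in>Poly_Mapping.keys x. Poly_Mapping.single [F] (Poly_Mapping.lookup x F))"

definition tens :: "T \<Rightarrow> T \<Rightarrow> T" where
  "tens x y = (\<Sum>u\<in>Poly_Mapping.keys x. \<Sum>v\<in>Poly_Mapping.keys y. Poly_Mapping.single (u @ v) (Poly_Mapping.lookup x u * Poly_Mapping.lookup y v))"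

definition tmult :: "T \<Rightarrow> T \<Rightarrow> T" where
  "tmult x y = (\<Sum>u\<in>Poly_Mapping.keys x. \<Sum>v\<in>Poly_Mapping.keys y.
      Poly_Mapping.single (map2 (+) u v) (Poly_Mapping.lookup x u * Poly_Mapping.lookup y v))"

definition unitH :: H where "unitH = Poly_Mapping.single {#} 1"
definition eta :: "rat \<Rightarrow> H" where "eta c = Poly_Mapping.single {#} c"
definition eps :: "H \<Rightarrow> rat" where "eps x = Poly_Mapping.lookup x {#}"

definition cop_tree :: "tree \<Rightarrow> T" where
  "cop_tree t = Poly_Mapping.single [{#}, {#t#}] 1 + Poly_Mapping.single [{#t#}, {#}] 1 +
     (\<Sum>C\<in>adm_cuts (rep t). Poly_Mapping.single [PC C (rep t), {#RC C (rep t)#}] 1)"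

text \<open>Delta is an algebra morphism: on a forest it is the product of the coproducts of its trees.\<close>
definition cop_forest :: "forest \<Rightarrow> T" where
  "cop_forest F = foldr (\<lambda>t acc. tmult (cop_tree t) acc) (SOME xs. mset xs = F)
      (Poly_Mapping.single [{#}, {#}] 1)"

definition cop :: "H \<Rightarrow> T" where
  "cop x = (\<Sum>F\<in>Poly_Mapping.keys x. smul (Poly_Mapping.lookup x F) (cop_forest F))"

definition rcop :: "H \<Rightarrow> T" where
  "rcop x = cop x - tens (embed unitH) (embed x) - tens (embed x) (embed unitH)"

definition Prim :: "H set" where
  "Prim = {x. rcop x = 0}"

definition apply_first :: "(H \<Rightarrow> T) \<Rightarrow> T \<Rightarrow> T" where
  "apply_first g w = (\<Sum>L\<in>Poly_Mapping.keys w. smul (Poly_Mapping.lookup w L)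
      (tens (g (Poly_Mapping.single (hd L) 1)) (Poly_Mapping.single (tl L) 1)))"

text \<open>iterated reduced coproduct \<tilde>\<Delta>^k : H \<rightarrow> H^{\<otimes>(k+1)}\<close>
fun rcop_it :: "nat \<Rightarrow> H \<Rightarrow> T" where
  "rcop_it 0 x = embed (x - eta (eps x))"
| "rcop_it (Suc 0) x = rcop x"
| "rcop_it (Suc (Suc k)) x = apply_first (rcop_it (Suc k)) (rcop x)"

definition flist :: "forest \<Rightarrow> tree list" where
  "flist F = (SOME xs. mset xs = F)"

definition topb :: "forest \<Rightarrow> forest \<Rightarrow> H" where
  "topb M N = (if N = {#} then 0 else
     smul (1 / of_nat (weight N))
       (\<Sum>(j, p)\<in>{(j, p). j < length (flist N) \<and> p \<in> pos (rep (flist N ! j))}.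
          Poly_Mapping.single
            (mset ((flist N)[j := iso (graft (map rep (flist M)) (rep (flist N ! j)) p)])) 1))"

definition top :: "H \<Rightarrow> H \<Rightarrow> H" where
  "top x y = (\<Sum>M\<in>Poly_Mapping.keys x. \<Sum>N\<in>Poly_Mapping.keys y. smul (Poly_Mapping.lookup x M * Poly_Mapping.lookup y N) (topb M N))"

text \<open>itop [p_i, ..., p_1] = p_i \<top> ... \<top> p_1 = (p_i \<top> ... \<top> p_2) \<top> p_1\<close>
fun itop :: "H list \<Rightarrow> H" where
  "itop [] = 0"
| "itop (a # as) = foldl top a as"

text \<open>linear extension to H^{\<otimes>i} of (x_i,...,x_1) \<mapsto> x_i \<top> ... \<top> x_1; its
  restriction to Prim^{\<otimes>i} is F_i\<close>
definition Fmap :: "nat \<Rightarrow> T \<Rightarrow> H" where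
  "Fmap i w = (\<Sum>L\<in>Poly_Mapping.keys w. if length L = i
      then smul (Poly_Mapping.lookup w L) (itop (map (\<lambda>F. Poly_Mapping.single F 1) L)) else 0)"

fun tensor_list :: "H list \<Rightarrow> T" where
  "tensor_list [] = Poly_Mapping.single [] 1"
| "tensor_list (x # xs) = tens (embed x) (tensor_list xs)"

definition primT :: "nat \<Rightarrow> T set" where
  "primT i = qspan {tensor_list ps | ps. length ps = i \<and> set ps \<subseteq> Prim}"

end

theory Submission
  imports Defs "HOL-Library.Product_Plus"
begin

text \<open>Write \<open>\<Delta>'\<close> for the reduced coproduct. The coproduct is the algebra morphism determined by
  \<open>\<Delta>(B\<^sup>+(F)) = B\<^sup>+(F) \<otimes> 1 + (Id \<otimes> B\<^sup>+)(\<Delta>(F))\<close>, and from this recursion grafting satisfies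
  a Leibniz rule under \<open>\<Delta>\<close>. Since \<open>\<Delta>\<close> preserves total weight, the normalisation \<open>1/weight(N)\<close>
  in \<open>\<top>\<close> commutes with it, and for primitive \<open>p\<close> (which has no constant term) one gets
  \<open>\<Delta>'(x \<top> p) = x \<otimes> p + (Id \<otimes> (- \<top> p))(\<Delta>'(x))\<close>. Iterating,
  \<open>\<Delta>'\<^sup>k(x \<top> p) = \<Delta>'\<^sup>k\<^sup>-\<^sup>1(x) \<otimes> p + (Id \<otimes> \<dots> \<otimes> Id \<otimes> (- \<top> p))(\<Delta>'\<^sup>k(x))\<close> when \<open>\<epsilon>(x) = 0\<close>, so by
  induction on \<open>i\<close> the iterate \<open>\<Delta>'\<^sup>i\<^sup>-\<^sup>1\<close> sends \<open>p\<^sub>i \<top> \<dots> \<top> p\<^sub>1\<close> to \<open>p\<^sub>i \<otimes> \<dots> \<otimes> p\<^sub>1\<close> and all higher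
  iterates kill it. Injectivity of \<open>F\<^sub>i\<close> follows, and in a vanishing sum
  \<open>\<eta>(c) + \<Sum>\<^sub>j F\<^sub>j(w\<^sub>j)\<close> the top term is isolated by \<open>\<Delta>'\<^sup>n\<^sup>-\<^sup>1\<close> and the constant by \<open>\<epsilon>\<close>.\<close>

section \<open>Linear maps between spaces of finitely supported rational functions\<close>

lemma lookup_smul [simp]: "Poly_Mapping.lookup (smul c x) k = c * Poly_Mapping.lookup x k"
  unfolding smul_def by transfer (simp add: when_def)

lemma smul_add: "smul c (x + y) = smul c x + smul c y"
  by (rule poly_mapping_eqI) (simp add: lookup_add algebra_simps)

lemma smul_add_left: "smul (c + d) x = smul c x + smul d x"
  by (rule poly_mapping_eqI) (simp add: lookup_add algebra_simps)

lemma smul_diff: "smul c (x - y) = smul c x - smul c y"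
  by (rule poly_mapping_eqI) (simp add: lookup_minus algebra_simps)

lemma smul_zero [simp]: "smul c 0 = 0"
  by (rule poly_mapping_eqI) simp

lemma smul_zero_left [simp]: "smul 0 x = 0"
  by (rule poly_mapping_eqI) simp

lemma smul_one [simp]: "smul 1 x = x"
  by (rule poly_mapping_eqI) simp

lemma smul_smul [simp]: "smul c (smul d x) = smul (c * d) x"
  by (rule poly_mapping_eqI) simp

lemma smul_single [simp]: "smul c (Poly_Mapping.single k a) = Poly_Mapping.single k (c * a)"
  by (rule poly_mapping_eqI) (simp add: lookup_single when_def)

lemma smul_sum: "smul c (sum f A) = (\<Sum>a\<in>A. smul c (f a))"
  by (induction A rule: infinite_finite_induct) (auto simp: smul_add)

lemma smul_conv_mult: "smul c (x :: 'a::monoid_add \<Rightarrow>\<^sub>0 rat) = Poly_Mapping.single 0 c * x"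
  unfolding smul_def by (rule Poly_Mapping.mult_map_scale_conv_mult)

lemma mult_smul_left: "smul c (x :: 'a::comm_monoid_add \<Rightarrow>\<^sub>0 rat) * y = smul c (x * y)"
  by (simp add: smul_conv_mult mult.assoc)

lemma mult_smul_right: "(x :: 'a::comm_monoid_add \<Rightarrow>\<^sub>0 rat) * smul c y = smul c (x * y)"
  by (simp add: smul_conv_mult mult.left_commute)

text \<open>The rational analogue of \<^const>\<open>frag_extend\<close>.\<close>

definition lin_extend :: "('a \<Rightarrow> ('b \<Rightarrow>\<^sub>0 rat)) \<Rightarrow> ('a \<Rightarrow>\<^sub>0 rat) \<Rightarrow> ('b \<Rightarrow>\<^sub>0 rat)" where
  "lin_extend f x = (\<Sum>k\<in>Poly_Mapping.keys x. smul (Poly_Mapping.lookup x k) (f k))"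

lemma lin_extend_zero [simp]: "lin_extend f 0 = 0"
  by (simp add: lin_extend_def)

lemma lin_extend_single [simp]: "lin_extend f (Poly_Mapping.single k c) = smul c (f k)"
  by (simp add: lin_extend_def)

lemma lin_extend_smul: "lin_extend f (smul c x) = smul c (lin_extend f x)"
proof (cases "c = 0")
  case False
  then have "Poly_Mapping.keys (smul c x) = Poly_Mapping.keys x"
    by (auto simp: in_keys_iff)
  with False show ?thesis by (simp add: lin_extend_def smul_sum)
qed (simp add: lin_extend_def)

lemma lin_extend_add: "lin_extend f (a + b) = lin_extend f a + lin_extend f b"
proof -
  let ?K = "Poly_Mapping.keys a \<union> Poly_Mapping.keys b"
  have "lin_extend f a = (\<Sum>k\<in>?K. smul (Poly_Mapping.lookup a k) (f k))"
    "lin_extend f b = (\<Sum>k\<in>?K. smul (Poly_Mapping.lookup b k) (f k))"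
    "lin_extend f (a + b) = (\<Sum>k\<in>?K. smul (Poly_Mapping.lookup (a + b) k) (f k))"
    unfolding lin_extend_def
    by (auto simp: in_keys_iff intro: sum.mono_neutral_cong_left dest: subsetD[OF keys_add])
  then show ?thesis
    by (simp add: lookup_add smul_add_left sum.distrib)
qed

lemma lin_extend_diff: "lin_extend f (a - b) = lin_extend f a - lin_extend f b"
  by (metis add_diff_cancel diff_add_cancel lin_extend_add)

lemma lin_extend_sum: "lin_extend f (sum g A) = (\<Sum>a\<in>A. lin_extend f (g a))"
  by (induction A rule: infinite_finite_induct) (auto simp: lin_extend_add)

lemma lin_extend_cong:
  "(\<And>k. k \<in> Poly_Mapping.keys x \<Longrightarrow> f k = g k) \<Longrightarrow> lin_extend f x = lin_extend g x"
  by (simp add: lin_extend_def)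

lemma lin_extend_basis [simp]: "lin_extend (\<lambda>k. Poly_Mapping.single k 1) x = x"
proof -
  have lookup_sum_single: "finite I \<Longrightarrow>
      Poly_Mapping.lookup (\<Sum>i\<in>I. Poly_Mapping.single i (Poly_Mapping.lookup x i)) j =
      (if j \<in> I then Poly_Mapping.lookup x j else 0)" for I j
    by (induction I rule: finite_induct) (auto simp: lookup_single lookup_add when_def)
  show ?thesis
    unfolding lin_extend_def
    by (rule poly_mapping_eqI) (fastforce simp: in_keys_iff lookup_sum_single)
qed

lemma poly_mapping_rat_induct [case_names zero add single]:
  fixes x :: "'a \<Rightarrow>\<^sub>0 rat"
  assumes "P 0" "\<And>a b. P a \<Longrightarrow> P b \<Longrightarrow> P (a + b)" "\<And>k c. P (Poly_Mapping.single k c)"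
  shows "P x"
proof -
  have sums: "P (\<Sum>i\<in>I. Poly_Mapping.single i (Poly_Mapping.lookup x i))" if "finite I" for I
    using that by (induction I rule: finite_induct) (auto intro: assms)
  have "P (lin_extend (\<lambda>k. Poly_Mapping.single k 1) x)"
    unfolding lin_extend_def using sums[OF finite_keys] by simp
  then show ?thesis by simp
qed

lemma poly_mapping_rat_induct_basis [case_names zero add smul basis]:
  fixes x :: "'a \<Rightarrow>\<^sub>0 rat"
  assumes "P 0" "\<And>a b. P a \<Longrightarrow> P b \<Longrightarrow> P (a + b)" "\<And>c a. P a \<Longrightarrow> P (smul c a)"
    "\<And>k. P (Poly_Mapping.single k 1)"
  shows "P x"
proof (induction x rule: poly_mapping_rat_induct)
  case (single k c)
  have "P (smul c (Poly_Mapping.single k 1))" by (intro assms)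
  then show ?case by simp
qed (use assms in auto)

lemma lin_extend_lin_extend: "lin_extend g (lin_extend f x) = lin_extend (\<lambda>k. lin_extend g (f k)) x"
  by (induction x rule: poly_mapping_rat_induct) (auto simp: lin_extend_add lin_extend_smul)

lemma lin_extend_plus_fun: "lin_extend (\<lambda>k. f k + g k) x = lin_extend f x + lin_extend g x"
  by (induction x rule: poly_mapping_rat_induct) (auto simp: lin_extend_add smul_add)

lemma lin_extend_zero_fun [simp]: "lin_extend (\<lambda>k. 0) x = 0"
  by (induction x rule: poly_mapping_rat_induct) (auto simp: lin_extend_add)

lemma lin_extend_smul_fun: "lin_extend (\<lambda>k. smul c (f k)) x = smul c (lin_extend f x)"
  by (induction x rule: poly_mapping_rat_induct) (auto simp: lin_extend_add smul_add mult.commute)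

lemma lin_extend_swap:
  "lin_extend (\<lambda>a. lin_extend (\<lambda>b. f a b) y) x = lin_extend (\<lambda>b. lin_extend (\<lambda>a. f a b) x) y"
  by (induction x rule: poly_mapping_rat_induct_basis)
    (simp_all add: lin_extend_add lin_extend_plus_fun lin_extend_smul lin_extend_smul_fun)

lemma keys_lin_extend:
  "Poly_Mapping.keys (lin_extend f x) \<subseteq> (\<Union>k\<in>Poly_Mapping.keys x. Poly_Mapping.keys (f k))"
  unfolding lin_extend_def
  by (rule order_trans[OF keys_sum]) (auto simp: in_keys_iff)

lemma lin_extend_mult:
  fixes f :: "'a::comm_monoid_add \<Rightarrow> ('b::comm_monoid_add \<Rightarrow>\<^sub>0 rat)"
  assumes "\<And>a b. f (a + b) = f a * f b"
  shows "lin_extend f (x * y) = lin_extend f x * lin_extend f y"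
proof (induction x rule: poly_mapping_rat_induct)
  case (single k c)
  show ?case
  proof (induction y rule: poly_mapping_rat_induct)
    case (single l d)
    show ?case by (simp add: Poly_Mapping.mult_single assms smul_conv_mult ac_simps)
  qed (simp_all add: distrib_left lin_extend_add)
qed (simp_all add: distrib_right lin_extend_add)

lemma lin_extend_one: "lin_extend f (1 :: 'a::comm_monoid_add \<Rightarrow>\<^sub>0 rat) = f 0"
  by (simp flip: single_one)

lemma lin_extend_mult_left:
  "(lin_extend f x :: 'a::comm_monoid_add \<Rightarrow>\<^sub>0 rat) * y = lin_extend (\<lambda>k. f k * y) x"
  by (induction x rule: poly_mapping_rat_induct_basis)
    (auto simp: lin_extend_add lin_extend_smul distrib_right mult_smul_left)

lemma lin_extend_mult_right:
  "y * (lin_extend f x :: 'a::comm_monoid_add \<Rightarrow>\<^sub>0 rat) = lin_extend (\<lambda>k. y * f k) x"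
  by (induction x rule: poly_mapping_rat_induct_basis)
    (auto simp: lin_extend_add lin_extend_smul distrib_left mult_smul_right)

definition rat_linear :: "(('a \<Rightarrow>\<^sub>0 rat) \<Rightarrow> ('b \<Rightarrow>\<^sub>0 rat)) \<Rightarrow> bool" where
  "rat_linear g \<longleftrightarrow> (\<forall>x y. g (x + y) = g x + g y) \<and> (\<forall>c x. g (smul c x) = smul c (g x))"

lemma rat_linear_lin_extend: "rat_linear (lin_extend f)"
  by (simp add: rat_linear_def lin_extend_add lin_extend_smul)

lemma rat_linear_add: "rat_linear g \<Longrightarrow> g (x + y) = g x + g y"
  by (simp add: rat_linear_def)

lemma rat_linear_smul: "rat_linear g \<Longrightarrow> g (smul c x) = smul c (g x)"
  by (simp add: rat_linear_def)

lemma rat_linear_zero: "rat_linear g \<Longrightarrow> g 0 = 0"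
  using rat_linear_smul[of g 0 0] by simp

lemma rat_linear_sum: "rat_linear g \<Longrightarrow> g (sum f A) = (\<Sum>a\<in>A. g (f a))"
  by (induction A rule: infinite_finite_induct) (auto simp: rat_linear_zero rat_linear_add)

lemma rat_linear_lin_extend_app: "rat_linear g \<Longrightarrow> g (lin_extend f x) = lin_extend (\<lambda>k. g (f k)) x"
  by (induction x rule: poly_mapping_rat_induct_basis)
    (auto simp: rat_linear_zero rat_linear_add rat_linear_smul lin_extend_add lin_extend_smul)

lemma rat_linear_conv_lin_extend:
  "rat_linear g \<Longrightarrow> g x = lin_extend (\<lambda>k. g (Poly_Mapping.single k 1)) x"
  using rat_linear_lin_extend_app[of g "\<lambda>k. Poly_Mapping.single k 1" x] by simp

lemma rat_linear_comp: "rat_linear g \<Longrightarrow> rat_linear h \<Longrightarrow> rat_linear (\<lambda>x. g (h x))"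
  by (simp add: rat_linear_def)

section \<open>The tensor square of \<open>H\<^sub>R\<close>\<close>

text \<open>\<open>H\<^sub>R \<otimes> H\<^sub>R\<close> is modelled on the monoid \<^typ>\<open>forest \<times> forest\<close>, so that its algebra structure is
  the ring structure of \<^typ>\<open>'a \<Rightarrow>\<^sub>0 rat\<close>; the tensors \<^typ>\<open>T\<close> of the statement carry no product,
  and \<open>to_T2\<close> below identifies the two models.\<close>

type_synonym H2 = "(forest \<times> forest) \<Rightarrow>\<^sub>0 rat"

definition tensor2 :: "H \<Rightarrow> H \<Rightarrow> H2" where
  "tensor2 x y = lin_extend (\<lambda>a. lin_extend (\<lambda>b. Poly_Mapping.single (a, b) 1) y) x"

lemma one_H2: "(1::H2) = Poly_Mapping.single ({#}, {#}) 1"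
  by (metis single_one zero_prod_def)

lemma tensor2_single [simp]:
  "tensor2 (Poly_Mapping.single a c) (Poly_Mapping.single b d) = Poly_Mapping.single (a, b) (c * d)"
  by (simp add: tensor2_def)

lemma tensor2_single_one [simp]: "tensor2 (Poly_Mapping.single a c) 1 = Poly_Mapping.single (a, {#}) c"
  by (metis mult.right_neutral single_one tensor2_single)

lemma tensor2_one_right: "tensor2 x 1 = lin_extend (\<lambda>a. Poly_Mapping.single (a, {#}) 1) x"
  by (simp add: tensor2_def flip: single_one)

lemma tensor2_one_left: "tensor2 1 y = lin_extend (\<lambda>b. Poly_Mapping.single ({#}, b) 1) y"
  by (simp add: tensor2_def flip: single_one)

lemma tensor2_lin_extend_left: "tensor2 (lin_extend f x) y = lin_extend (\<lambda>a. tensor2 (f a) y) x"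
  by (simp add: tensor2_def lin_extend_lin_extend)

lemma tensor2_lin_extend_right: "tensor2 x (lin_extend f y) = lin_extend (\<lambda>b. tensor2 x (f b)) y"
  by (simp add: tensor2_def lin_extend_lin_extend lin_extend_swap[of _ _ x])

lemma tensor2_add_left: "tensor2 (x + x') y = tensor2 x y + tensor2 x' y"
  by (simp add: tensor2_def lin_extend_add)

lemma tensor2_add_right: "tensor2 x (y + y') = tensor2 x y + tensor2 x y'"
  by (simp add: tensor2_def lin_extend_add lin_extend_plus_fun)

lemma tensor2_smul_left: "tensor2 (smul c x) y = smul c (tensor2 x y)"
  by (simp add: tensor2_def lin_extend_smul)

lemma tensor2_smul_right: "tensor2 x (smul c y) = smul c (tensor2 x y)"
  by (simp add: tensor2_def lin_extend_smul lin_extend_smul_fun)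

lemma tensor2_zero_left [simp]: "tensor2 0 y = 0"
  by (simp add: tensor2_def)

lemma tensor2_zero_right [simp]: "tensor2 x 0 = 0"
  by (simp add: tensor2_def)

lemma tensor2_conv_mult: "tensor2 x y = tensor2 x 1 * tensor2 1 y"
  unfolding tensor2_one_right tensor2_one_left
  by (simp add: tensor2_def lin_extend_mult_left lin_extend_mult_right Poly_Mapping.mult_single)
    (rule lin_extend_swap)

lemma tensor2_mult: "tensor2 (x * x') (y * y') = tensor2 x y * tensor2 x' y'"
proof -
  have "tensor2 (x * x') 1 = tensor2 x 1 * tensor2 x' 1" "tensor2 1 (y * y') = tensor2 1 y * tensor2 1 y'"
    unfolding tensor2_one_right tensor2_one_left
    by (rule lin_extend_mult, simp add: Poly_Mapping.mult_single)+
  then show ?thesis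
    by (simp only: tensor2_conv_mult[of "x * x'" "y * y'"] tensor2_conv_mult[of x y]
        tensor2_conv_mult[of x' y'] ac_simps)
qed

lemma lookup_tensor2:
  "Poly_Mapping.lookup (tensor2 x y) (a, b) = Poly_Mapping.lookup x a * Poly_Mapping.lookup y b"
proof (induction x rule: poly_mapping_rat_induct)
  case (single k c)
  show ?case
    by (induction y rule: poly_mapping_rat_induct)
      (auto simp: tensor2_add_right lookup_add algebra_simps lookup_single when_def)
qed (simp_all add: tensor2_add_left lookup_add algebra_simps)

lemma tens_conv_lin_extend:
  "tens x y = lin_extend (\<lambda>u. lin_extend (\<lambda>v. Poly_Mapping.single (u @ v) 1) y) x"
  by (simp add: tens_def lin_extend_def smul_sum)

lemma tmult_conv_lin_extend:
  "tmult x y = lin_extend (\<lambda>u. lin_extend (\<lambda>v. Poly_Mapping.single (map2 (+) u v) 1) y) x"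
  by (simp add: tmult_def lin_extend_def smul_sum)

lemma embed_conv_lin_extend: "embed x = lin_extend (\<lambda>F. Poly_Mapping.single [F] 1) x"
  by (simp add: embed_def lin_extend_def)

lemma tens_lin_extend_left: "tens (lin_extend f x) y = lin_extend (\<lambda>k. tens (f k) y) x"
  by (simp add: tens_conv_lin_extend lin_extend_lin_extend)

lemma tens_lin_extend_right: "tens x (lin_extend f y) = lin_extend (\<lambda>k. tens x (f k)) y"
  by (simp add: tens_conv_lin_extend lin_extend_lin_extend) (rule lin_extend_swap)

lemma tmult_lin_extend_left: "tmult (lin_extend f x) y = lin_extend (\<lambda>k. tmult (f k) y) x"
  by (simp add: tmult_conv_lin_extend lin_extend_lin_extend)

lemma tmult_lin_extend_right: "tmult x (lin_extend f y) = lin_extend (\<lambda>k. tmult x (f k)) y"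
  by (simp add: tmult_conv_lin_extend lin_extend_lin_extend) (rule lin_extend_swap)

lemma tens_single [simp]:
  "tens (Poly_Mapping.single u c) (Poly_Mapping.single v d) = Poly_Mapping.single (u @ v) (c * d)"
  by (simp add: tens_conv_lin_extend)

lemma tmult_single [simp]:
  "tmult (Poly_Mapping.single u c) (Poly_Mapping.single v d) = Poly_Mapping.single (map2 (+) u v) (c * d)"
  by (simp add: tmult_conv_lin_extend)

lemma embed_single [simp]: "embed (Poly_Mapping.single F c) = Poly_Mapping.single [F] c"
  by (simp add: embed_conv_lin_extend)

lemma tens_assoc: "tens (tens x y) z = tens x (tens y z)"
  by (simp add: tens_conv_lin_extend lin_extend_lin_extend)

lemma tens_Nil_right: "tens x (Poly_Mapping.single [] 1) = x"
  by (simp add: tens_conv_lin_extend)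

lemma tens_Nil_left: "tens (Poly_Mapping.single [] 1) x = x"
  by (simp add: tens_conv_lin_extend)

lemma tensor_list_snoc: "tensor_list (qs @ [p]) = tens (tensor_list qs) (embed p)"
  by (induction qs) (simp_all add: tens_Nil_right tens_Nil_left tens_assoc)

definition to_T2 :: "H2 \<Rightarrow> T" where
  "to_T2 = lin_extend (\<lambda>k. Poly_Mapping.single [fst k, snd k] 1)"

lemma to_T2_single [simp]: "to_T2 (Poly_Mapping.single (A, B) c) = Poly_Mapping.single [A, B] c"
  by (simp add: to_T2_def)

lemma to_T2_zero [simp]: "to_T2 0 = 0"
  by (simp add: to_T2_def)

lemma to_T2_add: "to_T2 (x + y) = to_T2 x + to_T2 y"
  by (simp add: to_T2_def lin_extend_add)

lemma to_T2_diff: "to_T2 (x - y) = to_T2 x - to_T2 y"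
  by (simp add: to_T2_def lin_extend_diff)

lemma to_T2_sum: "to_T2 (sum f A) = (\<Sum>a\<in>A. to_T2 (f a))"
  by (simp add: to_T2_def lin_extend_sum)

lemma to_T2_lin_extend: "to_T2 (lin_extend f x) = lin_extend (\<lambda>k. to_T2 (f k)) x"
  by (simp add: to_T2_def lin_extend_lin_extend)

lemma to_T2_tensor2: "to_T2 (tensor2 x y) = tens (embed x) (embed y)"
  by (simp add: tensor2_def to_T2_lin_extend embed_conv_lin_extend tens_lin_extend_left
      tens_lin_extend_right lin_extend_lin_extend) (rule lin_extend_swap)

lemma tmult_to_T2: "tmult (to_T2 X) (to_T2 Y) = to_T2 (X * Y)"
proof -
  have "X * Y = lin_extend (\<lambda>k. Poly_Mapping.single k 1) X * lin_extend (\<lambda>m. Poly_Mapping.single m 1) Y"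
    by simp
  also have "\<dots> = lin_extend (\<lambda>k. lin_extend (\<lambda>m. Poly_Mapping.single k 1 * Poly_Mapping.single m 1) Y) X"
    by (subst lin_extend_mult_left) (simp only: lin_extend_mult_right)
  finally show ?thesis
    by (simp add: to_T2_def tmult_lin_extend_left tmult_lin_extend_right lin_extend_lin_extend
        Poly_Mapping.mult_single) (rule lin_extend_swap)
qed

lemma lookup_to_T2: "Poly_Mapping.lookup (to_T2 Y) [a, b] = Poly_Mapping.lookup Y (a, b)"
proof (induction Y rule: poly_mapping_rat_induct)
  case (single k c)
  obtain A B where "k = (A, B)" by fastforce
  then show ?case by (auto simp: lookup_single when_def)
qed (simp_all add: to_T2_add lookup_add)

lemma to_T2_eq_0_iff [simp]: "to_T2 Y = 0 \<longleftrightarrow> Y = 0"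
proof
  assume "to_T2 Y = 0"
  then show "Y = 0"
    by (intro poly_mapping_eqI) (metis lookup_to_T2 lookup_zero prod.collapse)
qed simp

primrec tweight :: "tree \<Rightarrow> nat" where
  "tweight (Node F) = 1 + sum_mset (image_mset tweight F)"

definition fweight :: "forest \<Rightarrow> nat" where
  "fweight F = sum_mset (image_mset tweight F)"

lemma fweight_empty [simp]: "fweight {#} = 0"
  by (simp add: fweight_def)

lemma fweight_add [simp]: "fweight (A + B) = fweight A + fweight B"
  by (simp add: fweight_def)

lemma fweight_add_mset [simp]: "fweight (add_mset t N) = tweight t + fweight N"
  by (simp add: fweight_def)

lemma tweight_Node: "tweight (Node F) = 1 + fweight F"
  by (simp add: fweight_def)

declare tweight.simps [simp del]

lemma tweight_pos: "tweight t > 0"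
  by (cases t) (simp add: tweight_Node)

lemma fweight_eq_0_iff: "fweight N = 0 \<longleftrightarrow> N = {#}"
  by (induction N) (auto simp: tweight_pos)

lemma surj_iso: "surj iso"
proof -
  have "\<exists>l. iso l = t" for t
  proof (induction t)
    case (Node F)
    obtain xs where xs: "mset xs = F" using ex_mset by blast
    have "\<forall>u\<in>set xs. iso (SOME l. iso l = u) = u"
      using Node xs by (metis (mono_tags, lifting) in_multiset_in_set someI_ex)
    then have "iso (LNode (map (\<lambda>u. SOME l. iso l = u) xs)) = Node F"
      by (simp add: xs map_idI)
    then show ?case by blast
  qed
  then show ?thesis by (metis surjI)
qed

lemma iso_rep [simp]: "iso (rep t) = t"
  unfolding rep_def by (rule someI_ex) (metis surj_iso surjD)

lemma Nil_in_pos [simp]: "[] \<in> pos l"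
  by (simp add: pos_def)

lemma pos_LNode: "pos (LNode ts) = insert [] (\<Union>j<length ts. Cons j ` pos (ts ! j))"
proof -
  have "p \<in> pos (LNode ts) \<longleftrightarrow> p \<in> insert [] (\<Union>j<length ts. Cons j ` pos (ts ! j))" for p
    by (cases p) (auto simp: pos_def)
  then show ?thesis by blast
qed

lemma finite_pos [simp]: "finite (pos l)"
  by (induction l) (auto simp: pos_LNode)

lemma sum_pos_LNode:
  "(\<Sum>p\<in>pos (LNode ts). f p) = f [] + (\<Sum>j<length ts. \<Sum>p\<in>pos (ts ! j). f (j # p))"
proof -
  have "(\<Sum>p\<in>pos (LNode ts). f p) = f [] + (\<Sum>p\<in>(\<Union>j<length ts. Cons j ` pos (ts ! j)). f p)"
    unfolding pos_LNode by (subst sum.insert) (auto simp: finite_UN)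
  also have "(\<Sum>p\<in>(\<Union>j<length ts. Cons j ` pos (ts ! j)). f p)
      = (\<Sum>j<length ts. \<Sum>p\<in>Cons j ` pos (ts ! j). f p)"
    by (rule sum.UNION_disjoint) auto
  also have "\<dots> = (\<Sum>j<length ts. \<Sum>p\<in>pos (ts ! j). f (j # p))"
    by (rule sum.cong) (auto simp: sum.reindex)
  finally show ?thesis .
qed

lemma sum_nth_conv_sum_mset: "(\<Sum>j<length xs. f (xs ! j)) = sum_mset (image_mset f (mset xs))"
proof -
  have "sum_mset (image_mset f (mset xs)) = sum_list (map f xs)"
    by (metis mset_map sum_mset_sum_list)
  then show ?thesis by (simp add: sum_list_sum_nth atLeast0LessThan)
qed

lemma card_pos: "card (pos l) = tweight (iso l)"
proof (induction l)
  case (LNode ts)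
  have "card (pos (LNode ts)) = 1 + (\<Sum>j<length ts. card (pos (ts ! j)))"
    using sum_pos_LNode[of "\<lambda>_. 1::nat" ts] by simp
  also have "\<dots> = 1 + (\<Sum>j<length ts. tweight (iso (ts ! j)))"
    using LNode by (auto intro!: sum.cong)
  also have "\<dots> = tweight (iso (LNode ts))"
    by (simp add: tweight_Node fweight_def sum_nth_conv_sum_mset[of "\<lambda>u. tweight (iso u)" ts]
        multiset.map_comp o_def)
  finally show ?case .
qed

lemma weight_eq_fweight: "weight N = fweight N"
  by (simp add: weight_def fweight_def card_pos)

section \<open>The coproduct as an algebra morphism \<open>H\<^sub>R \<rightarrow> H\<^sub>R \<otimes> H\<^sub>R\<close>\<close>

definition B_plus :: "H \<Rightarrow> H" where
  "B_plus = lin_extend (\<lambda>F. Poly_Mapping.single {#Node F#} 1)"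

definition id_tensor_B_plus :: "H2 \<Rightarrow> H2" where
  "id_tensor_B_plus = lin_extend (\<lambda>(A, B). Poly_Mapping.single (A, {#Node B#}) 1)"

text \<open>The coproduct is defined by the recursion
  \<open>\<Delta>(B\<^sup>+(F)) = B\<^sup>+(F) \<otimes> 1 + (Id \<otimes> B\<^sup>+)(\<Delta>(F))\<close>; its agreement with the cut formula of
  \<^const>\<open>cop\<close> is the lemma \<open>cop_eq\<close>.\<close>

primrec Delta_tree :: "tree \<Rightarrow> H2" where
  "Delta_tree (Node F) = Poly_Mapping.single ({#Node F#}, {#}) 1 +
     id_tensor_B_plus (prod_mset (image_mset Delta_tree F))"

definition Delta_forest :: "forest \<Rightarrow> H2" where
  "Delta_forest F = prod_mset (image_mset Delta_tree F)"

definition Delta :: "H \<Rightarrow> H2" where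
  "Delta = lin_extend Delta_forest"

lemma Delta_forest_empty [simp]: "Delta_forest {#} = 1"
  by (simp add: Delta_forest_def)

lemma Delta_forest_single [simp]: "Delta_forest {#t#} = Delta_tree t"
  by (simp add: Delta_forest_def)

lemma Delta_forest_add: "Delta_forest (A + B) = Delta_forest A * Delta_forest B"
  by (simp add: Delta_forest_def)

lemma Delta_forest_add_mset: "Delta_forest (add_mset t N) = Delta_forest N * Delta_tree t"
  by (simp add: Delta_forest_def mult.commute)

lemma Delta_tree_Node:
  "Delta_tree (Node F) = Poly_Mapping.single ({#Node F#}, {#}) 1 + id_tensor_B_plus (Delta_forest F)"
  by (simp add: Delta_forest_def)

declare Delta_tree.simps [simp del]

lemma Delta_zero [simp]: "Delta 0 = 0"
  by (simp add: Delta_def)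

lemma Delta_single [simp]: "Delta (Poly_Mapping.single F c) = smul c (Delta_forest F)"
  by (simp add: Delta_def)

lemma Delta_mult: "Delta (x * y) = Delta x * Delta y"
  unfolding Delta_def by (rule lin_extend_mult) (simp add: Delta_forest_add)

lemma Delta_add: "Delta (x + y) = Delta x + Delta y"
  by (simp add: Delta_def lin_extend_add)

lemma Delta_smul: "Delta (smul c x) = smul c (Delta x)"
  by (simp add: Delta_def lin_extend_smul)

lemma Delta_lin_extend: "Delta (lin_extend f x) = lin_extend (\<lambda>k. Delta (f k)) x"
  unfolding Delta_def by (rule lin_extend_lin_extend)

lemma B_plus_single [simp]: "B_plus (Poly_Mapping.single F c) = Poly_Mapping.single {#Node F#} c"
  by (simp add: B_plus_def)

lemma B_plus_zero [simp]: "B_plus 0 = 0"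
  by (simp add: B_plus_def)

lemma B_plus_add: "B_plus (x + y) = B_plus x + B_plus y"
  by (simp add: B_plus_def lin_extend_add)

lemma B_plus_sum: "B_plus (sum f A) = (\<Sum>a\<in>A. B_plus (f a))"
  by (simp add: B_plus_def lin_extend_sum)

lemma id_tensor_B_plus_single [simp]:
  "id_tensor_B_plus (Poly_Mapping.single (A, B) c) = Poly_Mapping.single (A, {#Node B#}) c"
  by (simp add: id_tensor_B_plus_def)

lemma id_tensor_B_plus_zero [simp]: "id_tensor_B_plus 0 = 0"
  by (simp add: id_tensor_B_plus_def)

lemma id_tensor_B_plus_add: "id_tensor_B_plus (x + y) = id_tensor_B_plus x + id_tensor_B_plus y"
  by (simp add: id_tensor_B_plus_def lin_extend_add)

lemma id_tensor_B_plus_smul: "id_tensor_B_plus (smul c x) = smul c (id_tensor_B_plus x)"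
  by (simp add: id_tensor_B_plus_def lin_extend_smul)

lemma id_tensor_B_plus_sum: "id_tensor_B_plus (sum f A) = (\<Sum>a\<in>A. id_tensor_B_plus (f a))"
  by (simp add: id_tensor_B_plus_def lin_extend_sum)

lemma Delta_B_plus: "Delta (B_plus x) = tensor2 (B_plus x) 1 + id_tensor_B_plus (Delta x)"
  by (induction x rule: poly_mapping_rat_induct)
    (simp_all add: B_plus_add Delta_add id_tensor_B_plus_add tensor2_add_left Delta_tree_Node
      smul_add id_tensor_B_plus_smul)

lemma id_tensor_B_plus_tensor2: "id_tensor_B_plus (tensor2 x y) = tensor2 x (B_plus y)"
proof (induction x rule: poly_mapping_rat_induct)
  case (single k c)
  show ?case
    by (induction y rule: poly_mapping_rat_induct)
      (simp_all add: tensor2_add_right id_tensor_B_plus_add B_plus_add)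
qed (simp_all add: tensor2_add_left id_tensor_B_plus_add)

definition homogeneous2 :: "nat \<Rightarrow> H2 \<Rightarrow> bool" where
  "homogeneous2 n X \<longleftrightarrow> (\<forall>k\<in>Poly_Mapping.keys X. fweight (fst k) + fweight (snd k) = n)"

lemma homogeneous2_single: "fweight A + fweight B = n \<Longrightarrow> homogeneous2 n (Poly_Mapping.single (A, B) c)"
  unfolding homogeneous2_def by simp

lemma homogeneous2_add: "homogeneous2 n X \<Longrightarrow> homogeneous2 n Y \<Longrightarrow> homogeneous2 n (X + Y)"
  unfolding homogeneous2_def using keys_add[of X Y] by blast

lemma homogeneous2_mult: "homogeneous2 a X \<Longrightarrow> homogeneous2 b Y \<Longrightarrow> homogeneous2 (a + b) (X * Y)"
  unfolding homogeneous2_def using keys_mult[of X Y] by fastforce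

lemma homogeneous2_id_tensor_B_plus:
  "homogeneous2 n X \<Longrightarrow> homogeneous2 (Suc n) (id_tensor_B_plus X)"
  unfolding homogeneous2_def id_tensor_B_plus_def using keys_lin_extend[of _ X]
  by (force split: prod.splits simp: tweight_Node)

lemma homogeneous2_Delta_forest_of_trees:
  "(\<And>t. t \<in># F \<Longrightarrow> homogeneous2 (tweight t) (Delta_tree t)) \<Longrightarrow>
    homogeneous2 (fweight F) (Delta_forest F)"
proof (induction F)
  case (add t F)
  then have "homogeneous2 (fweight F + tweight t) (Delta_forest F * Delta_tree t)"
    by (intro homogeneous2_mult) auto
  then show ?case by (simp add: Delta_forest_add_mset add.commute)
qed (simp add: one_H2 homogeneous2_single)

lemma homogeneous2_Delta_tree: "homogeneous2 (tweight t) (Delta_tree t)"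
proof (induction t)
  case (Node F)
  then have "homogeneous2 (fweight F) (Delta_forest F)"
    by (intro homogeneous2_Delta_forest_of_trees) auto
  then show ?case
    by (auto simp: Delta_tree_Node tweight_Node intro!: homogeneous2_add homogeneous2_single
        dest: homogeneous2_id_tensor_B_plus)
qed

lemma homogeneous2_Delta_forest: "homogeneous2 (fweight F) (Delta_forest F)"
  by (intro homogeneous2_Delta_forest_of_trees homogeneous2_Delta_tree)

lemma lookup_Delta_empty: "Poly_Mapping.lookup (Delta x) ({#}, {#}) = Poly_Mapping.lookup x {#}"
proof (induction x rule: poly_mapping_rat_induct)
  case (single N c)
  have "({#}, {#}) \<notin> Poly_Mapping.keys (Delta_forest N)" if "N \<noteq> {#}"
    using homogeneous2_Delta_forest[of N] that by (auto simp: homogeneous2_def fweight_eq_0_iff)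
  then show ?case
    by (cases "N = {#}") (auto simp: one_H2 in_keys_iff lookup_single)
qed (simp_all add: Delta_add lookup_add)

section \<open>Admissible cuts and the recursive formula for the coproduct\<close>

definition prefix_antichain :: "nat list set \<Rightarrow> bool" where
  "prefix_antichain C \<longleftrightarrow> (\<forall>p\<in>C. \<forall>q\<in>C. (\<exists>r. q = p @ r) \<longrightarrow> p = q)"

lemma prefix_antichain_iff: "prefix_antichain C \<longleftrightarrow> (\<forall>p r. p \<in> C \<longrightarrow> p @ r \<in> C \<longrightarrow> r = [])"
  by (auto simp: prefix_antichain_def)

definition cuts :: "ltree \<Rightarrow> nat list set set" where
  "cuts l = {C. C \<subseteq> pos l - {[]} \<and> prefix_antichain C}"

lemma adm_cuts_eq: "adm_cuts l = cuts l - {{}}"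
  by (auto simp: adm_cuts_def cuts_def prefix_antichain_def)

lemma empty_in_cuts [simp]: "{} \<in> cuts l"
  by (simp add: cuts_def prefix_antichain_def)

lemma finite_cuts: "finite (cuts l)"
  by (rule finite_subset[of _ "Pow (pos l)"]) (auto simp: cuts_def)

lemma finite_cut: "C \<in> cuts l \<Longrightarrow> finite C"
  unfolding cuts_def using finite_subset[of C "pos l"] by auto

lemma Nil_notin_cut: "C \<in> cuts l \<Longrightarrow> [] \<notin> C"
  by (auto simp: cuts_def)

lemma Cons_mem_pos_Cons:
  "0 # p \<in> pos (LNode (t # ts)) \<longleftrightarrow> p \<in> pos t"
  "Suc i # p \<in> pos (LNode (t # ts)) \<longleftrightarrow> i # p \<in> pos (LNode ts)"
  by (simp_all add: pos_def)

text \<open>A cut of \<^term>\<open>LNode (t # ts)\<close> splits into its part in the first subtree \<open>t\<close> (or the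
  edge to \<open>t\<close> itself, encoded as \<^term>\<open>{[]}\<close>) and a cut of \<^term>\<open>LNode ts\<close>.\<close>

definition cut_first :: "nat list set \<Rightarrow> nat list set" where
  "cut_first C = {p. 0 # p \<in> C}"

definition cut_rest :: "nat list set \<Rightarrow> nat list set" where
  "cut_rest C = {i # p | i p. Suc i # p \<in> C}"

definition join_cuts :: "nat list set \<times> nat list set \<Rightarrow> nat list set" where
  "join_cuts AB = Cons 0 ` fst AB \<union> {Suc i # q | i q. i # q \<in> snd AB}"

lemma mem_cut_first [simp]: "p \<in> cut_first C \<longleftrightarrow> 0 # p \<in> C"
  by (simp add: cut_first_def)

lemma Cons_mem_cut_rest [simp]: "i # p \<in> cut_rest C \<longleftrightarrow> Suc i # p \<in> C"
  by (simp add: cut_rest_def)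

lemma mem_join_cuts:
  "p \<in> join_cuts (A, B) \<longleftrightarrow> (\<exists>q. p = 0 # q \<and> q \<in> A) \<or> (\<exists>i q. p = Suc i # q \<and> i # q \<in> B)"
  by (auto simp: join_cuts_def)

lemma join_cut_first_cut_rest: "[] \<notin> C \<Longrightarrow> join_cuts (cut_first C, cut_rest C) = C"
proof (intro set_eqI iffI)
  fix p assume "[] \<notin> C" "p \<in> C"
  then obtain i q where "p = i # q" by (cases p) auto
  with \<open>p \<in> C\<close> show "p \<in> join_cuts (cut_first C, cut_rest C)"
    by (cases i) (auto simp: mem_join_cuts)
qed (auto simp: mem_join_cuts)

lemma cut_first_join_cuts: "cut_first (join_cuts (A, B)) = A"
  by (auto simp: mem_join_cuts)

lemma cut_rest_join_cuts: "[] \<notin> B \<Longrightarrow> cut_rest (join_cuts (A, B)) = B"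
proof (intro set_eqI iffI)
  fix p assume "[] \<notin> B" "p \<in> B"
  then obtain i q where "p = i # q" by (cases p) auto
  with \<open>p \<in> B\<close> show "p \<in> cut_rest (join_cuts (A, B))"
    by (simp add: mem_join_cuts)
qed (auto simp: mem_join_cuts cut_rest_def)

lemma cut_first_mem_cuts:
  assumes C: "C \<in> cuts (LNode (t # ts))"
  shows "cut_first C \<in> insert {[]} (cuts t)"
proof -
  have ac: "prefix_antichain C" using C by (simp add: cuts_def)
  show ?thesis
  proof (cases "[0] \<in> C")
    case True
    have "p = []" if "0 # p \<in> C" for p
      using ac True that unfolding prefix_antichain_iff by (metis append_Cons append_Nil)
    with True have "cut_first C = {[]}" by auto
    then show ?thesis by simp
  next
    case False
    have "cut_first C \<subseteq> pos t - {[]}"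
      using C False by (auto simp: cuts_def Cons_mem_pos_Cons)
    moreover have "prefix_antichain (cut_first C)"
      unfolding prefix_antichain_iff
    proof (intro allI impI)
      fix p r assume "p \<in> cut_first C" "p @ r \<in> cut_first C"
      then have "0 # p \<in> C" "(0 # p) @ r \<in> C" by simp_all
      then show "r = []" using ac unfolding prefix_antichain_iff by blast
    qed
    ultimately show ?thesis by (simp add: cuts_def)
  qed
qed

lemma cut_rest_mem_cuts:
  assumes C: "C \<in> cuts (LNode (t # ts))"
  shows "cut_rest C \<in> cuts (LNode ts)"
proof -
  have "cut_rest C \<subseteq> pos (LNode ts) - {[]}"
    using C by (auto simp: cuts_def cut_rest_def Cons_mem_pos_Cons)
  moreover have "prefix_antichain (cut_rest C)"
    unfolding prefix_antichain_iff
  proof (intro allI impI)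
    fix p r assume "p \<in> cut_rest C" "p @ r \<in> cut_rest C"
    then obtain i q where "Suc i # q \<in> C" "(Suc i # q) @ r \<in> C"
      by (auto simp: cut_rest_def)
    then show "r = []"
      using C unfolding cuts_def prefix_antichain_iff by blast
  qed
  ultimately show ?thesis by (simp add: cuts_def)
qed

lemma join_cuts_mem_cuts:
  assumes A: "A \<in> insert {[]} (cuts t)" and B: "B \<in> cuts (LNode ts)"
  shows "join_cuts (A, B) \<in> cuts (LNode (t # ts))"
proof -
  have NilB: "[] \<notin> B" using B by (rule Nil_notin_cut)
  have A': "prefix_antichain A" "A \<subseteq> pos t"
    using A by (auto simp: cuts_def prefix_antichain_iff)
  have B': "prefix_antichain B" "B \<subseteq> pos (LNode ts)"
    using B by (auto simp: cuts_def)
  have "join_cuts (A, B) \<subseteq> pos (LNode (t # ts)) - {[]}"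
    using A' B' NilB by (auto simp: mem_join_cuts Cons_mem_pos_Cons subset_iff)
  moreover have "prefix_antichain (join_cuts (A, B))"
    unfolding prefix_antichain_iff
  proof (intro allI impI)
    fix p r assume p: "p \<in> join_cuts (A, B)" and pr: "p @ r \<in> join_cuts (A, B)"
    from p NilB consider q where "p = 0 # q" "q \<in> A" | i q where "p = Suc i # q" "i # q \<in> B"
      by (auto simp: mem_join_cuts)
    then show "r = []"
    proof cases
      case 1
      then have "q @ r \<in> A" using pr NilB by (auto simp: mem_join_cuts)
      then show ?thesis using 1 A' by (auto simp: prefix_antichain_iff)
    next
      case 2
      then have "(i # q) @ r \<in> B" using pr NilB by (auto simp: mem_join_cuts)
      then show ?thesis using 2 B' unfolding prefix_antichain_iff by blast
    qed
  qed
  ultimately show ?thesis by (simp add: cuts_def)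
qed

lemma bij_betw_join_cuts:
  "bij_betw join_cuts (insert {[]} (cuts t) \<times> cuts (LNode ts)) (cuts (LNode (t # ts)))"
proof (rule bij_betw_byWitness[where f' = "\<lambda>C. (cut_first C, cut_rest C)"])
  show "\<forall>AB\<in>insert {[]} (cuts t) \<times> cuts (LNode ts). (cut_first (join_cuts AB), cut_rest (join_cuts AB)) = AB"
    by (auto simp: cut_first_join_cuts cut_rest_join_cuts Nil_notin_cut)
  show "\<forall>C\<in>cuts (LNode (t # ts)). join_cuts (cut_first C, cut_rest C) = C"
    using join_cut_first_cut_rest Nil_notin_cut by metis
  show "join_cuts ` (insert {[]} (cuts t) \<times> cuts (LNode ts)) \<subseteq> cuts (LNode (t # ts))"
    using join_cuts_mem_cuts by auto
  show "(\<lambda>C. (cut_first C, cut_rest C)) ` cuts (LNode (t # ts)) \<subseteq> insert {[]} (cuts t) \<times> cuts (LNode ts)"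
    using cut_first_mem_cuts cut_rest_mem_cuts by auto
qed

lemma PC_join_cuts:
  assumes "finite A" "finite B" "[] \<notin> B"
  shows "PC (join_cuts (A, B)) (LNode (t # ts)) = PC A t + PC B (LNode ts)"
proof -
  let ?shift = "\<lambda>q::nat list. Suc (hd q) # tl q"
  have shift: "{Suc i # q | i q. i # q \<in> B} = ?shift ` B"
  proof (intro set_eqI iffI)
    fix p assume "p \<in> {Suc i # q | i q. i # q \<in> B}"
    then obtain i q where "p = Suc i # q" "i # q \<in> B" by blast
    then show "p \<in> ?shift ` B" by (intro image_eqI[where x = "i # q"]) simp_all
  next
    fix p assume "p \<in> ?shift ` B"
    then obtain r where r: "r \<in> B" "p = ?shift r" by blast
    with assms(3) obtain i q where "r = i # q" by (cases r) auto
    with r show "p \<in> {Suc i # q | i q. i # q \<in> B}" by auto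
  qed
  have "inj_on ?shift B"
    using assms(3) by (intro inj_onI) (metis list.collapse list.inject nat.inject)
  moreover have "mset_set (join_cuts (A, B)) = mset_set (Cons 0 ` A) + mset_set (?shift ` B)"
    unfolding join_cuts_def fst_conv snd_conv shift using assms by (intro mset_set_Union) auto
  ultimately have "mset_set (join_cuts (A, B)) = image_mset (Cons 0) (mset_set A) + image_mset ?shift (mset_set B)"
    using assms by (simp add: image_mset_mset_set)
  moreover have "image_mset (\<lambda>p. iso (sub (LNode (t # ts)) (?shift p))) (mset_set B)
      = image_mset (\<lambda>p. iso (sub (LNode ts) p)) (mset_set B)"
  proof (rule image_mset_cong)
    fix q assume "q \<in># mset_set B"
    with assms obtain i r where "q = i # r" by (cases q) auto
    then show "iso (sub (LNode (t # ts)) (?shift q)) = iso (sub (LNode ts) q)" by simp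
  qed
  ultimately show ?thesis
    by (simp add: PC_def multiset.map_comp o_def)
qed

lemma prune_Cons:
  "children (prune C (LNode (t # ts))) =
     (if [0] \<in> C then [] else [prune (cut_first C) t]) @ children (prune (cut_rest C) (LNode ts))"
proof -
  have z: "zip [0..<length (t # ts)] (t # ts) = (0, t) # map (\<lambda>(i, u). (Suc i, u)) (zip [0..<length ts] ts)"
    by (simp add: upt_conv_Cons map_Suc_upt[symmetric] zip_map1 del: upt_Suc)
  have m: "map (\<lambda>x. (\<lambda>(i, u). if [i] \<in> C then [] else [prune {p. i # p \<in> C} u]) ((\<lambda>(i, u). (Suc i, u)) x))
        (zip [0..<length ts] ts)
      = map (\<lambda>(i, u). if [i] \<in> cut_rest C then [] else [prune {p. i # p \<in> cut_rest C} u])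
        (zip [0..<length ts] ts)"
    by (rule map_cong) auto
  show ?thesis
    unfolding prune.simps children.simps z list.map(2) concat.simps map_map o_def m
    by (simp add: cut_first_def)
qed

lemma prune_empty: "prune {} l = l"
proof (induction l)
  case (LNode ts)
  have empty: "cut_first {} = {}" "cut_rest {} = {}" by (auto simp: cut_first_def cut_rest_def)
  from LNode have "children (prune {} (LNode ts)) = ts"
  proof (induction ts)
    case (Cons t ts)
    then show ?case by (simp add: prune_Cons empty del: prune.simps)
  qed simp
  moreover have "prune {} (LNode ts) = LNode (children (prune {} (LNode ts)))"
    by simp
  ultimately show ?case by simp
qed

lemma iso_prune: "iso (prune C l) = Node (mset (map iso (children (prune C l))))"
  by (cases l) simp

text \<open>\<open>P\<^sup>C(l) \<otimes> R\<^sup>C(l)\<close> with the root of \<open>R\<^sup>C(l)\<close> removed; \<^const>\<open>id_tensor_B_plus\<close> puts it back.\<close>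

definition cut_term :: "nat list set \<Rightarrow> ltree \<Rightarrow> H2" where
  "cut_term C l = Poly_Mapping.single (PC C l, mset (map iso (children (prune C l)))) 1"

definition cut_sum :: "ltree \<Rightarrow> H2" where
  "cut_sum l = (\<Sum>C\<in>cuts l. cut_term C l)"

lemma cut_sum_Nil: "cut_sum (LNode []) = 1"
proof -
  have "cuts (LNode []) = {{}}"
    by (auto simp: cuts_def pos_LNode prefix_antichain_def)
  then show ?thesis by (simp add: cut_sum_def cut_term_def PC_def one_H2 Poly_Mapping.mult_single)
qed

lemma cut_term_join_cuts:
  assumes A: "A \<in> insert {[]} (cuts t)" and B: "B \<in> cuts (LNode ts)"
  shows "cut_term (join_cuts (A, B)) (LNode (t # ts)) =
    (if A = {[]} then Poly_Mapping.single ({#iso t#}, {#}) 1 else id_tensor_B_plus (cut_term A t)) *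
    cut_term B (LNode ts)"
proof -
  have fin: "finite A" "finite B" and NilB: "[] \<notin> B"
    using A B finite_cut Nil_notin_cut by auto
  have pc: "PC (join_cuts (A, B)) (LNode (t # ts)) = PC A t + PC B (LNode ts)"
    using fin NilB by (rule PC_join_cuts)
  have "[0] \<in> join_cuts (A, B) \<longleftrightarrow> A = {[]}"
    using A Nil_notin_cut by (auto simp: mem_join_cuts)
  then have ch: "children (prune (join_cuts (A, B)) (LNode (t # ts))) =
      (if A = {[]} then [] else [prune A t]) @ children (prune B (LNode ts))"
    by (simp add: prune_Cons cut_first_join_cuts cut_rest_join_cuts NilB del: prune.simps)
  show ?thesis
  proof (cases "A = {[]}")
    case True
    then have "PC A t = {#iso t#}" by (simp add: PC_def)
    then show ?thesis
      unfolding cut_term_def pc ch using True by (simp add: Poly_Mapping.mult_single)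
  next
    case False
    then show ?thesis
      by (simp add: cut_term_def pc ch Poly_Mapping.mult_single iso_prune[of A t]
          del: prune.simps)
  qed
qed

lemma cut_sum_Cons:
  "cut_sum (LNode (t # ts)) =
    (Poly_Mapping.single ({#iso t#}, {#}) 1 + id_tensor_B_plus (cut_sum t)) * cut_sum (LNode ts)"
proof -
  let ?a = "\<lambda>A. if A = {[]} then Poly_Mapping.single ({#iso t#}, {#}) 1 else id_tensor_B_plus (cut_term A t)"
  have "cut_sum (LNode (t # ts)) =
      (\<Sum>AB\<in>insert {[]} (cuts t) \<times> cuts (LNode ts). cut_term (join_cuts AB) (LNode (t # ts)))"
    unfolding cut_sum_def by (rule sum.reindex_bij_betw[OF bij_betw_join_cuts, symmetric])
  also have "\<dots> = (\<Sum>(A, B)\<in>insert {[]} (cuts t) \<times> cuts (LNode ts). ?a A * cut_term B (LNode ts))"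
    by (rule sum.cong) (auto simp: cut_term_join_cuts)
  also have "\<dots> = sum ?a (insert {[]} (cuts t)) * cut_sum (LNode ts)"
    by (simp add: cut_sum_def sum_product sum.cartesian_product)
  also have "sum ?a (insert {[]} (cuts t)) = Poly_Mapping.single ({#iso t#}, {#}) 1 + id_tensor_B_plus (cut_sum t)"
  proof -
    have "{[]} \<notin> cuts t" using Nil_notin_cut by blast
    moreover have "sum ?a (cuts t) = id_tensor_B_plus (cut_sum t)"
      unfolding cut_sum_def id_tensor_B_plus_sum using \<open>{[]} \<notin> cuts t\<close>
      by (intro sum.cong) auto
    ultimately show ?thesis by (simp add: finite_cuts)
  qed
  finally show ?thesis .
qed

lemma cut_sum_eq_Delta_forest: "cut_sum l = Delta_forest (mset (map iso (children l)))"
proof (induction l)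
  case (LNode ts)
  then show ?case
  proof (induction ts)
    case (Cons t ts)
    obtain cs where t: "t = LNode cs" by (cases t)
    have "Delta_tree (iso t) = Poly_Mapping.single ({#iso t#}, {#}) 1 + id_tensor_B_plus (cut_sum t)"
      using Cons.prems t by (simp add: Delta_tree_Node)
    with Cons show ?case
      by (simp add: cut_sum_Cons Delta_forest_add_mset mult.commute)
  qed (simp add: cut_sum_Nil)
qed

lemma cop_tree_eq: "cop_tree t = to_T2 (Delta_tree t)"
proof -
  define l where "l = rep t"
  obtain cs where l: "l = LNode cs" by (cases l)
  have t: "t = iso l" by (simp add: l_def)
  have "cuts l = insert {} (adm_cuts l)" "{} \<notin> adm_cuts l" "finite (adm_cuts l)"
    by (auto simp: adm_cuts_eq finite_cuts)
  then have "(\<Sum>C\<in>cuts l. Poly_Mapping.single [PC C l, {#RC C l#}] 1) =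
      Poly_Mapping.single [{#}, {#t#}] (1::rat) + (\<Sum>C\<in>adm_cuts l. Poly_Mapping.single [PC C l, {#RC C l#}] 1)"
    by (simp add: PC_def RC_def prune_empty t)
  moreover have "(\<Sum>C\<in>cuts l. Poly_Mapping.single [PC C l, {#RC C l#}] (1::rat)) =
      to_T2 (id_tensor_B_plus (cut_sum l))"
    unfolding cut_sum_def id_tensor_B_plus_sum to_T2_sum
    by (rule sum.cong) (simp_all add: cut_term_def RC_def iso_prune[of _ l])
  ultimately have "cop_tree t = Poly_Mapping.single [{#t#}, {#}] 1 + to_T2 (id_tensor_B_plus (cut_sum l))"
    by (simp add: cop_tree_def l_def[symmetric] add_ac)
  also have "\<dots> = to_T2 (Delta_tree t)"
    by (simp add: cut_sum_eq_Delta_forest l t Delta_tree_Node to_T2_add)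
  finally show ?thesis .
qed

lemma cop_forest_eq: "cop_forest F = to_T2 (Delta_forest F)"
proof -
  define ts where "ts = (SOME ts. mset ts = F)"
  have ts: "mset ts = F" unfolding ts_def by (rule someI_ex) (rule ex_mset)
  have "foldr (\<lambda>t acc. tmult (cop_tree t) acc) us (Poly_Mapping.single [{#}, {#}] 1) =
      to_T2 (prod_list (map Delta_tree us))" for us
    by (induction us) (simp_all add: one_H2 cop_tree_eq tmult_to_T2)
  then have "cop_forest F = to_T2 (prod_list (map Delta_tree ts))"
    by (simp add: cop_forest_def ts_def)
  also have "prod_list (map Delta_tree ts) = Delta_forest F"
    by (metis Delta_forest_def mset_map prod_mset_prod_list ts)
  finally show ?thesis .
qed

lemma cop_eq: "cop x = to_T2 (Delta x)"
proof -
  have "cop x = lin_extend cop_forest x"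
    by (simp add: cop_def lin_extend_def)
  also have "\<dots> = to_T2 (Delta x)"
    unfolding cop_forest_eq[abs_def] by (simp add: Delta_def to_T2_lin_extend)
  finally show ?thesis .
qed

lemma rcop_eq: "rcop x = to_T2 (Delta x - tensor2 1 x - tensor2 x 1)"
  by (simp add: rcop_def cop_eq to_T2_diff to_T2_tensor2 unitH_def)

lemma Prim_iff: "p \<in> Prim \<longleftrightarrow> Delta p = tensor2 p 1 + tensor2 1 p"
  by (auto simp: Prim_def rcop_eq algebra_simps)

lemma eps_Prim: "p \<in> Prim \<Longrightarrow> eps p = 0"
  using lookup_Delta_empty[of p]
  by (simp add: Prim_iff eps_def lookup_add lookup_tensor2 flip: single_one)

section \<open>Grafting and its coproduct\<close>

text \<open>\<^term>\<open>grafts M N\<close> is \<open>\<Sum>\<^sub>v N\<^sub>v\<close>, the sum over all vertices \<open>v\<close> of \<open>N\<close> of the forest obtained by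
  attaching every tree of \<open>M\<close> to \<open>v\<close>: either \<open>v\<close> is the root of a tree of \<open>N\<close>, or it lies in
  one of the subtrees below that root.\<close>

primrec grafts_tree :: "forest \<Rightarrow> tree \<Rightarrow> H" where
  "grafts_tree M (Node F) = Poly_Mapping.single {#Node (F + M)#} 1 +
     B_plus (sum_mset (image_mset (\<lambda>t. Poly_Mapping.single (F - {#t#}) 1 * grafts_tree M t) F))"

definition grafts :: "forest \<Rightarrow> forest \<Rightarrow> H" where
  "grafts M N = sum_mset (image_mset (\<lambda>t. Poly_Mapping.single (N - {#t#}) 1 * grafts_tree M t) N)"

lemma grafts_onto_empty [simp]: "grafts M {#} = 0"
  by (simp add: grafts_def)

lemma grafts_single [simp]: "grafts M {#t#} = grafts_tree M t"
  by (simp add: grafts_def)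

lemma grafts_tree_Node:
  "grafts_tree M (Node F) = Poly_Mapping.single {#Node (F + M)#} 1 + B_plus (grafts M F)"
  by (simp add: grafts_def)

declare grafts_tree.simps [simp del]

lemma single_add_eq_mult:
  "Poly_Mapping.single (a + b) (1::rat) = Poly_Mapping.single a 1 * Poly_Mapping.single b 1"
  by (simp add: Poly_Mapping.mult_single)

lemma grafts_add:
  "grafts M (A + B) = grafts M A * Poly_Mapping.single B 1 + Poly_Mapping.single A 1 * grafts M B"
proof -
  have "image_mset (\<lambda>t. Poly_Mapping.single (A + B - {#t#}) 1 * grafts_tree M t) A
      = image_mset (\<lambda>t. Poly_Mapping.single (A - {#t#}) 1 * grafts_tree M t * Poly_Mapping.single B 1) A"
  proof (rule image_mset_cong)
    fix t assume "t \<in># A"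
    then have "A + B - {#t#} = (A - {#t#}) + B" by simp
    then show "Poly_Mapping.single (A + B - {#t#}) 1 * grafts_tree M t =
        Poly_Mapping.single (A - {#t#}) 1 * grafts_tree M t * Poly_Mapping.single B 1"
      by (simp add: single_add_eq_mult ac_simps)
  qed
  moreover have "image_mset (\<lambda>t. Poly_Mapping.single (A + B - {#t#}) 1 * grafts_tree M t) B
      = image_mset (\<lambda>t. Poly_Mapping.single A 1 * (Poly_Mapping.single (B - {#t#}) 1 * grafts_tree M t)) B"
  proof (rule image_mset_cong)
    fix t assume "t \<in># B"
    then have "A + B - {#t#} = A + (B - {#t#})" by simp
    then show "Poly_Mapping.single (A + B - {#t#}) 1 * grafts_tree M t =
        Poly_Mapping.single A 1 * (Poly_Mapping.single (B - {#t#}) 1 * grafts_tree M t)"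
      by (simp add: single_add_eq_mult ac_simps)
  qed
  ultimately show ?thesis
    unfolding grafts_def image_mset_union sum_mset.union
    by (simp add: sum_mset_distrib_left sum_mset_distrib_right)
qed

lemma grafts_add_mset:
  "grafts M (add_mset t N) = grafts M N * Poly_Mapping.single {#t#} 1 + Poly_Mapping.single N 1 * grafts_tree M t"
  using grafts_add[of M N "{#t#}"] by simp

lemma grafts_empty_of_trees:
  "(\<And>t. t \<in># N \<Longrightarrow> grafts_tree {#} t = Poly_Mapping.single {#t#} (of_nat (tweight t))) \<Longrightarrow>
    grafts {#} N = Poly_Mapping.single N (of_nat (fweight N))"
  by (induction N)
    (simp_all add: grafts_add_mset Poly_Mapping.mult_single add.commute flip: single_add)

lemma grafts_tree_empty: "grafts_tree {#} t = Poly_Mapping.single {#t#} (of_nat (tweight t))"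
proof (induction t)
  case (Node F)
  then have "grafts {#} F = Poly_Mapping.single F (of_nat (fweight F))"
    by (intro grafts_empty_of_trees) auto
  then show ?case
    by (simp add: grafts_tree_Node tweight_Node add.commute flip: single_add)
qed

lemma grafts_empty: "grafts {#} N = Poly_Mapping.single N (of_nat (fweight N))"
  by (intro grafts_empty_of_trees grafts_tree_empty)

text \<open>The two ways in which \<open>\<Delta>\<close> splits a grafted forest, according to whether the grafting
  vertex lands in the pruned part \<open>P\<^sup>C\<close> or in the trunk \<open>R\<^sup>C\<close>.\<close>

definition graft_left :: "forest \<Rightarrow> H2 \<Rightarrow> H2" where
  "graft_left M = lin_extend (\<lambda>k. tensor2 (grafts M (fst k)) (Poly_Mapping.single (snd k) 1))"

definition graft_right :: "H2 \<Rightarrow> H2 \<Rightarrow> H2" where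
  "graft_right X Y = lin_extend (\<lambda>k. lin_extend (\<lambda>m.
      tensor2 (Poly_Mapping.single (fst k + fst m) 1) (grafts (snd m) (snd k))) Y) X"

lemma graft_left_single [simp]:
  "graft_left M (Poly_Mapping.single (A, B) c) = smul c (tensor2 (grafts M A) (Poly_Mapping.single B 1))"
  by (simp add: graft_left_def)

lemma graft_left_zero [simp]: "graft_left M 0 = 0"
  by (simp add: graft_left_def)

lemma graft_left_add: "graft_left M (x + y) = graft_left M x + graft_left M y"
  by (simp add: graft_left_def lin_extend_add)

lemma graft_left_smul: "graft_left M (smul c x) = smul c (graft_left M x)"
  by (simp add: graft_left_def lin_extend_smul)

lemma graft_right_single [simp]:
  "graft_right (Poly_Mapping.single (A, B) c) (Poly_Mapping.single (M1, M2) d) =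
   smul (c * d) (tensor2 (Poly_Mapping.single (A + M1) 1) (grafts M2 B))"
  by (simp add: graft_right_def)

lemma graft_right_zero_left [simp]: "graft_right 0 z = 0"
  by (simp add: graft_right_def)

lemma graft_right_zero_right [simp]: "graft_right x 0 = 0"
  by (simp add: graft_right_def)

lemma graft_right_add_left: "graft_right (x + y) z = graft_right x z + graft_right y z"
  by (simp add: graft_right_def lin_extend_add)

lemma graft_right_add_right: "graft_right x (y + z) = graft_right x y + graft_right x z"
  by (simp add: graft_right_def lin_extend_add lin_extend_plus_fun)

lemma graft_right_smul_left: "graft_right (smul c x) z = smul c (graft_right x z)"
  by (simp add: graft_right_def lin_extend_smul)

lemma graft_right_smul_right: "graft_right x (smul c z) = smul c (graft_right x z)"
  by (simp add: graft_right_def lin_extend_smul lin_extend_smul_fun)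

lemma graft_left_mult: "graft_left M (X * Y) = graft_left M X * Y + X * graft_left M Y"
proof (induction X rule: poly_mapping_rat_induct_basis)
  case (basis k)
  obtain A B where k: "k = (A, B)" by fastforce
  show ?case
  proof (induction Y rule: poly_mapping_rat_induct_basis)
    case (basis l)
    obtain A' B' where l: "l = (A', B')" by fastforce
    have "tensor2 (grafts M (A + A')) (Poly_Mapping.single (B + B') 1)
      = tensor2 (grafts M A) (Poly_Mapping.single B 1) * tensor2 (Poly_Mapping.single A' 1) (Poly_Mapping.single B' 1)
      + tensor2 (Poly_Mapping.single A 1) (Poly_Mapping.single B 1) * tensor2 (grafts M A') (Poly_Mapping.single B' 1)"
      by (simp only: grafts_add single_add_eq_mult tensor2_add_left tensor2_mult)
    then show ?case by (simp add: k l Poly_Mapping.mult_single)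
  qed (simp_all add: graft_left_add graft_left_smul distrib_left mult_smul_right smul_add)
qed (simp_all add: graft_left_add graft_left_smul distrib_right mult_smul_left smul_add)

lemma graft_left_id_tensor_B_plus: "graft_left M (id_tensor_B_plus X) = id_tensor_B_plus (graft_left M X)"
proof (induction X rule: poly_mapping_rat_induct)
  case (single k c)
  obtain A B where "k = (A, B)" by fastforce
  then show ?case by (simp add: id_tensor_B_plus_smul id_tensor_B_plus_tensor2)
qed (simp_all add: graft_left_add id_tensor_B_plus_add)

lemma graft_right_single_empty [simp]: "graft_right (Poly_Mapping.single (A, {#}) c) Z = 0"
  by (simp add: graft_right_def)

lemma graft_right_basis_mult:
  "graft_right (Poly_Mapping.single (A, B) 1 * Poly_Mapping.single (A', B') 1) (Poly_Mapping.single (M1, M2) 1) =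
    graft_right (Poly_Mapping.single (A, B) 1) (Poly_Mapping.single (M1, M2) 1) * Poly_Mapping.single (A', B') 1 +
    Poly_Mapping.single (A, B) 1 * graft_right (Poly_Mapping.single (A', B') 1) (Poly_Mapping.single (M1, M2) 1)"
proof -
  have "tensor2 (Poly_Mapping.single (A + A' + M1) 1) (grafts M2 B * Poly_Mapping.single B' 1)
      = tensor2 (Poly_Mapping.single (A + M1) 1) (grafts M2 B) * tensor2 (Poly_Mapping.single A' 1) (Poly_Mapping.single B' 1)"
    using tensor2_mult[of "Poly_Mapping.single (A + M1) 1" "Poly_Mapping.single A' 1"]
    by (simp add: Poly_Mapping.mult_single add_ac)
  moreover have "tensor2 (Poly_Mapping.single (A + A' + M1) 1) (Poly_Mapping.single B 1 * grafts M2 B')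
      = tensor2 (Poly_Mapping.single A 1) (Poly_Mapping.single B 1) * tensor2 (Poly_Mapping.single (A' + M1) 1) (grafts M2 B')"
    using tensor2_mult[of "Poly_Mapping.single A 1" "Poly_Mapping.single (A' + M1) 1"]
    by (simp add: Poly_Mapping.mult_single add_ac)
  ultimately show ?thesis
    by (simp add: Poly_Mapping.mult_single grafts_add tensor2_add_right)
qed

lemma graft_right_mult_left: "graft_right (X * Y) Z = graft_right X Z * Y + X * graft_right Y Z"
proof (induction X rule: poly_mapping_rat_induct_basis)
  case (basis k)
  show ?case
  proof (induction Y rule: poly_mapping_rat_induct_basis)
    case (basis l)
    show ?case
    proof (induction Z rule: poly_mapping_rat_induct_basis)
      case (basis m)
      show ?case using graft_right_basis_mult[of "fst k" "snd k" "fst l" "snd l" "fst m" "snd m"] by simp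
    qed (simp_all add: graft_right_add_right graft_right_smul_right distrib_left distrib_right
        mult_smul_left mult_smul_right smul_add)
  qed (simp_all add: graft_right_add_left graft_right_smul_left distrib_left mult_smul_right smul_add)
qed (simp_all add: graft_right_add_left graft_right_smul_left distrib_right mult_smul_left smul_add)

lemma graft_right_id_tensor_B_plus:
  "graft_right (id_tensor_B_plus X) Z = id_tensor_B_plus (X * Z) + id_tensor_B_plus (graft_right X Z)"
proof (induction X rule: poly_mapping_rat_induct)
  case (single k c)
  obtain A B where k: "k = (A, B)" by fastforce
  show ?case
  proof (induction Z rule: poly_mapping_rat_induct)
    case (single m e)
    obtain M1 M2 where "m = (M1, M2)" by fastforce
    with k show ?case
      by (simp add: grafts_tree_Node Poly_Mapping.mult_single tensor2_add_right smul_add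
          id_tensor_B_plus_smul id_tensor_B_plus_tensor2 grafts_def)
  qed (simp_all add: graft_right_add_right id_tensor_B_plus_add distrib_left)
qed (simp_all add: graft_right_add_left id_tensor_B_plus_add distrib_right)

lemma Delta_grafts_of_trees:
  assumes "\<And>t. t \<in># N \<Longrightarrow>
    Delta (grafts_tree M t) = graft_left M (Delta_tree t) + graft_right (Delta_tree t) (Delta_forest M)"
  shows "Delta (grafts M N) = graft_left M (Delta_forest N) + graft_right (Delta_forest N) (Delta_forest M)"
  using assms
proof (induction N)
  case (add t N)
  have "Delta (grafts M (add_mset t N)) =
      Delta (grafts M N) * Delta_tree t + Delta_forest N * Delta (grafts_tree M t)"
    by (simp add: grafts_add_mset Delta_add Delta_mult)
  with add show ?case
    by (simp add: Delta_forest_add_mset graft_left_mult graft_right_mult_left algebra_simps)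
qed (simp add: one_H2)

lemma Delta_grafts_tree:
  "Delta (grafts_tree M t) = graft_left M (Delta_tree t) + graft_right (Delta_tree t) (Delta_forest M)"
proof (induction t)
  case (Node F)
  then have "Delta (grafts M F) = graft_left M (Delta_forest F) + graft_right (Delta_forest F) (Delta_forest M)"
    by (intro Delta_grafts_of_trees) auto
  then show ?case
    by (simp add: grafts_tree_Node Delta_add Delta_B_plus Delta_tree_Node Delta_forest_add graft_left_add
        graft_right_add_left graft_left_id_tensor_B_plus graft_right_id_tensor_B_plus tensor2_add_left
        id_tensor_B_plus_add)
qed

lemma Delta_grafts:
  "Delta (grafts M N) = graft_left M (Delta_forest N) + graft_right (Delta_forest N) (Delta_forest M)"
  by (intro Delta_grafts_of_trees Delta_grafts_tree)

section \<open>The operation \<open>\<top>\<close> and its coproduct\<close>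

lemma sum_graft_pos_child:
  assumes j: "j < length ts"
  shows "(\<Sum>p\<in>pos (ts ! j). Poly_Mapping.single {#iso (graft ms (LNode ts) (j # p))#} (1::rat)) =
    B_plus (Poly_Mapping.single (mset (map iso ts) - {#iso (ts ! j)#}) 1 *
      (\<Sum>p\<in>pos (ts ! j). Poly_Mapping.single {#iso (graft ms (ts ! j) p)#} 1))"
proof -
  have "mset (map iso (ts[j := u])) = add_mset (iso u) (mset (map iso ts) - {#iso (ts ! j)#})" for u
    using j by (simp add: map_update mset_update)
  then show ?thesis
    by (simp add: sum_distrib_left B_plus_sum Poly_Mapping.mult_single add.commute)
qed

lemma sum_graft_pos:
  "(\<Sum>p\<in>pos l. Poly_Mapping.single {#iso (graft ms l p)#} 1) = grafts_tree (mset (map iso ms)) (iso l)"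
proof (induction l)
  case (LNode ts)
  define M where "M = mset (map iso ms)"
  define F where "F = mset (map iso ts)"
  define f where "f = (\<lambda>u. Poly_Mapping.single (F - {#u#}) 1 * grafts_tree M u)"
  have "(\<Sum>p\<in>pos (LNode ts). Poly_Mapping.single {#iso (graft ms (LNode ts) p)#} (1::rat)) =
      Poly_Mapping.single {#Node (F + M)#} 1 +
      (\<Sum>j<length ts. \<Sum>p\<in>pos (ts ! j). Poly_Mapping.single {#iso (graft ms (LNode ts) (j # p))#} 1)"
    by (subst sum_pos_LNode) (simp add: F_def M_def)
  also have "\<dots> = Poly_Mapping.single {#Node (F + M)#} 1 + (\<Sum>j<length ts. B_plus (f (iso (ts ! j))))"
  proof (intro arg_cong[where f = "(+) _"] sum.cong refl)
    fix j assume "j \<in> {..<length ts}"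
    then have j: "j < length ts" by simp
    have "(\<Sum>p\<in>pos (ts ! j). Poly_Mapping.single {#iso (graft ms (ts ! j) p)#} 1) = grafts_tree M (iso (ts ! j))"
      using LNode j by (simp add: M_def)
    then show "(\<Sum>p\<in>pos (ts ! j). Poly_Mapping.single {#iso (graft ms (LNode ts) (j # p))#} 1) =
        B_plus (f (iso (ts ! j)))"
      unfolding sum_graft_pos_child[OF j] by (simp add: f_def F_def)
  qed
  also have "(\<Sum>j<length ts. B_plus (f (iso (ts ! j)))) = B_plus (\<Sum>j<length ts. f (iso (ts ! j)))"
    by (simp add: B_plus_sum)
  also have "(\<Sum>j<length ts. f (iso (ts ! j))) = sum_mset (image_mset f F)"
    by (simp only: sum_nth_conv_sum_mset[of "\<lambda>u. f (iso u)" ts]) (simp add: F_def multiset.map_comp o_def)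
  also have "sum_mset (image_mset f F) = grafts M F"
    by (simp add: grafts_def f_def)
  finally show ?case
    by (simp add: grafts_tree_Node F_def M_def)
qed

definition top_basis :: "forest \<Rightarrow> forest \<Rightarrow> H" where
  "top_basis M N = smul (1 / of_nat (fweight N)) (grafts M N)"

lemma sum_graft_pos_update:
  assumes "mset xs = N" "j < length xs"
  shows "(\<Sum>p\<in>pos (rep (xs ! j)). Poly_Mapping.single (mset (xs[j := iso (graft ms (rep (xs ! j)) p)])) (1::rat)) =
    Poly_Mapping.single (N - {#xs ! j#}) 1 * grafts_tree (mset (map iso ms)) (xs ! j)"
proof -
  have "(\<Sum>p\<in>pos (rep (xs ! j)). Poly_Mapping.single (mset (xs[j := iso (graft ms (rep (xs ! j)) p)])) (1::rat)) =
      Poly_Mapping.single (N - {#xs ! j#}) 1 *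
      (\<Sum>p\<in>pos (rep (xs ! j)). Poly_Mapping.single {#iso (graft ms (rep (xs ! j)) p)#} 1)"
    using assms by (simp add: sum_distrib_left mset_update Poly_Mapping.mult_single add.commute)
  then show ?thesis by (simp add: sum_graft_pos)
qed

lemma topb_eq_top_basis: "topb M N = top_basis M N"
proof (cases "N = {#}")
  case False
  define xs where "xs = flist N"
  define ms where "ms = map rep (flist M)"
  have xs: "mset xs = N" unfolding xs_def flist_def by (rule someI_ex) (rule ex_mset)
  have "mset (flist M) = M" unfolding flist_def by (rule someI_ex) (rule ex_mset)
  then have ms: "image_mset iso (mset ms) = M" by (simp add: ms_def multiset.map_comp o_def)
  have "{(j, p). j < length xs \<and> p \<in> pos (rep (xs ! j))} = Sigma {..<length xs} (\<lambda>j. pos (rep (xs ! j)))"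
    by auto
  then have "(\<Sum>(j, p)\<in>{(j, p). j < length xs \<and> p \<in> pos (rep (xs ! j))}.
          Poly_Mapping.single (mset (xs[j := iso (graft ms (rep (xs ! j)) p)])) (1::rat))
      = (\<Sum>j<length xs. Poly_Mapping.single (N - {#xs ! j#}) 1 * grafts_tree M (xs ! j))"
    by (simp add: sum.Sigma[symmetric] sum_graft_pos_update[OF xs] ms)
  also have "\<dots> = grafts M N"
    by (simp add: sum_nth_conv_sum_mset[of "\<lambda>u. Poly_Mapping.single (N - {#u#}) 1 * grafts_tree M u" xs]
        xs grafts_def)
  finally show ?thesis
    using False by (simp add: topb_def top_basis_def xs_def[symmetric] ms_def[symmetric] weight_eq_fweight)
qed (simp add: topb_def top_basis_def)

lemma top_conv_lin_extend: "top x y = lin_extend (\<lambda>M. lin_extend (\<lambda>N. top_basis M N) y) x"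
  by (simp add: top_def lin_extend_def topb_eq_top_basis smul_sum)

lemma top_lin_extend_left: "top (lin_extend f x) y = lin_extend (\<lambda>k. top (f k) y) x"
  by (simp add: top_conv_lin_extend lin_extend_lin_extend)

lemma top_lin_extend_right: "top x (lin_extend f y) = lin_extend (\<lambda>k. top x (f k)) y"
  by (simp add: top_conv_lin_extend lin_extend_lin_extend lin_extend_swap[of _ _ x])

lemma lookup_topb_empty: "Poly_Mapping.lookup (topb M N) {#} = 0"
proof -
  have "Poly_Mapping.lookup (Poly_Mapping.single (mset (xs[j := u])) (1::rat)) {#} = 0"
    if "j < length xs" for xs :: "tree list" and j u
    using that by (auto simp: lookup_single when_def)
  then show ?thesis
    by (auto simp: topb_def lookup_sum intro!: sum.neutral)
qed

lemma eps_top: "eps (top x y) = 0"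
  by (simp add: eps_def top_def lookup_sum lookup_topb_empty)

lemma top_one: "top 1 p = p - Poly_Mapping.single {#} (Poly_Mapping.lookup p {#})"
proof -
  have "top 1 p = lin_extend (top_basis {#}) p"
    by (simp add: top_conv_lin_extend lin_extend_one)
  also have "\<dots> = p - Poly_Mapping.single {#} (Poly_Mapping.lookup p {#})"
  proof (induction p rule: poly_mapping_rat_induct)
    case (single N c)
    then show ?case
      by (cases "N = {#}") (simp_all add: top_basis_def grafts_empty fweight_eq_0_iff lookup_single)
  qed (simp_all add: lin_extend_add lookup_add single_add)
  finally show ?thesis .
qed

definition divide_weight2 :: "H2 \<Rightarrow> H2" where
  "divide_weight2 = lin_extend (\<lambda>k. Poly_Mapping.single k (1 / of_nat (fweight (fst k) + fweight (snd k))))"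

lemma divide_weight2_homogeneous2:
  assumes "homogeneous2 n X"
  shows "divide_weight2 X = smul (1 / of_nat n) X"
proof -
  have "divide_weight2 X = lin_extend (\<lambda>k. smul (1 / of_nat n) (Poly_Mapping.single k 1)) X"
    unfolding divide_weight2_def using assms by (intro lin_extend_cong) (simp add: homogeneous2_def)
  also have "\<dots> = smul (1 / of_nat n) X"
    by (simp only: lin_extend_smul_fun lin_extend_basis)
  finally show ?thesis .
qed

lemma Delta_top_basis:
  "Delta (top_basis M N) =
    graft_left M (divide_weight2 (Delta_forest N)) + graft_right (divide_weight2 (Delta_forest N)) (Delta_forest M)"
  by (simp add: top_basis_def Delta_smul Delta_grafts divide_weight2_homogeneous2[OF homogeneous2_Delta_forest]
      smul_add graft_left_smul graft_right_smul_left)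

definition id_tensor_top :: "H \<Rightarrow> H2 \<Rightarrow> H2" where
  "id_tensor_top p = lin_extend (\<lambda>k. tensor2 (Poly_Mapping.single (fst k) 1) (top (Poly_Mapping.single (snd k) 1) p))"

lemma Delta_top_single:
  assumes prim: "Delta p = tensor2 p 1 + tensor2 1 p"
  shows "Delta (top (Poly_Mapping.single M 1) p) =
    tensor2 (top (Poly_Mapping.single M 1) p) 1 + id_tensor_top p (Delta_forest M)"
proof -
  have "Delta (top (Poly_Mapping.single M 1) p) = lin_extend (\<lambda>N. Delta (top_basis M N)) p"
    by (simp add: top_conv_lin_extend Delta_lin_extend)
  also have "\<dots> =
      graft_left M (divide_weight2 (Delta p)) + graft_right (divide_weight2 (Delta p)) (Delta_forest M)"
    unfolding Delta_top_basis
    by (simp add: lin_extend_plus_fun Delta_def graft_left_def graft_right_def divide_weight2_def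
        lin_extend_lin_extend)
  also have "graft_left M (divide_weight2 (Delta p)) = tensor2 (top (Poly_Mapping.single M 1) p) 1"
    by (simp add: prim divide_weight2_def graft_left_def lin_extend_add tensor2_one_left tensor2_one_right
        lin_extend_lin_extend top_conv_lin_extend tensor2_lin_extend_left top_basis_def tensor2_smul_left
        lin_extend_smul)
  also have "graft_right (divide_weight2 (Delta p)) (Delta_forest M) = id_tensor_top p (Delta_forest M)"
    by (simp add: prim divide_weight2_def graft_right_def lin_extend_add tensor2_one_left tensor2_one_right
        lin_extend_lin_extend id_tensor_top_def top_conv_lin_extend tensor2_lin_extend_right top_basis_def
        tensor2_smul_right lin_extend_smul_fun lin_extend_swap[of _ "Delta_forest M"])
  finally show ?thesis .
qed

lemma Delta_top:
  assumes prim: "Delta p = tensor2 p 1 + tensor2 1 p"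
  shows "Delta (top x p) = tensor2 (top x p) 1 + id_tensor_top p (Delta x)"
proof -
  have x: "top x p = lin_extend (\<lambda>M. top (Poly_Mapping.single M 1) p) x"
    using top_lin_extend_left[of "\<lambda>M. Poly_Mapping.single M 1" x p] by simp
  have "Delta (top x p) = lin_extend (\<lambda>M. Delta (top (Poly_Mapping.single M 1) p)) x"
    by (subst x) (rule Delta_lin_extend)
  also have "\<dots> = lin_extend (\<lambda>M. tensor2 (top (Poly_Mapping.single M 1) p) 1 + id_tensor_top p (Delta_forest M)) x"
    by (simp add: Delta_top_single[OF prim])
  also have "\<dots> = tensor2 (top x p) 1 + id_tensor_top p (Delta x)"
    by (subst x) (simp add: lin_extend_plus_fun tensor2_lin_extend_left Delta_def id_tensor_top_def
        lin_extend_lin_extend)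
  finally show ?thesis .
qed

lemma id_tensor_top_diff: "id_tensor_top p (X - Y) = id_tensor_top p X - id_tensor_top p Y"
  by (simp add: id_tensor_top_def lin_extend_diff)

lemma id_tensor_top_one_left: "id_tensor_top p (tensor2 1 x) = tensor2 1 (top x p)"
  by (simp add: tensor2_one_left id_tensor_top_def lin_extend_lin_extend tensor2_lin_extend_right
      top_lin_extend_left[of "\<lambda>N. Poly_Mapping.single N 1" x, simplified])

lemma id_tensor_top_one_right: "id_tensor_top p (tensor2 x 1) = tensor2 x (top 1 p)"
  by (simp add: tensor2_one_right id_tensor_top_def lin_extend_lin_extend tensor2_lin_extend_left
      flip: tensor2_lin_extend_left[of "\<lambda>N. Poly_Mapping.single N 1", simplified])

definition apply_last :: "(H \<Rightarrow> H) \<Rightarrow> T \<Rightarrow> T" where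
  "apply_last G = lin_extend (\<lambda>L. tens (Poly_Mapping.single (butlast L) 1) (embed (G (Poly_Mapping.single (last L) 1))))"

lemma apply_last_to_T2:
  "apply_last G (to_T2 Y) =
    to_T2 (lin_extend (\<lambda>k. tensor2 (Poly_Mapping.single (fst k) 1) (G (Poly_Mapping.single (snd k) 1))) Y)"
  by (simp add: apply_last_def to_T2_def lin_extend_lin_extend to_T2_tensor2[unfolded to_T2_def])

lemma rcop_top:
  assumes "p \<in> Prim"
  shows "rcop (top x p) = tens (embed x) (embed p) + apply_last (\<lambda>z. top z p) (rcop x)"
proof -
  have "Delta p = tensor2 p 1 + tensor2 1 p" using assms by (simp add: Prim_iff)
  then have "rcop (top x p) = to_T2 (id_tensor_top p (Delta x) - tensor2 1 (top x p))"
    by (simp add: rcop_eq Delta_top)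
  moreover have "top 1 p = p"
    using eps_Prim[OF assms] by (simp add: top_one eps_def)
  then have "apply_last (\<lambda>z. top z p) (rcop x) =
      to_T2 (id_tensor_top p (Delta x) - tensor2 1 (top x p) - tensor2 x p)"
    unfolding rcop_eq apply_last_to_T2
    by (simp add: id_tensor_top_def[symmetric] id_tensor_top_diff id_tensor_top_one_left id_tensor_top_one_right)
  ultimately show ?thesis
    by (simp add: to_T2_diff to_T2_tensor2)
qed

section \<open>The iterated reduced coproduct of \<open>p\<^sub>i \<top> \<dots> \<top> p\<^sub>1\<close>\<close>

lemma rat_linear_rcop: "rat_linear rcop"
proof -
  have "Delta (x + y) - tensor2 1 (x + y) - tensor2 (x + y) 1 =
      (Delta x - tensor2 1 x - tensor2 x 1) + (Delta y - tensor2 1 y - tensor2 y 1)" for x y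
    by (simp add: Delta_add tensor2_add_left tensor2_add_right)
  moreover have "Delta (smul c x) - tensor2 1 (smul c x) - tensor2 (smul c x) 1 =
      smul c (Delta x - tensor2 1 x - tensor2 x 1)" for c x
    by (simp add: Delta_smul tensor2_smul_left tensor2_smul_right smul_diff)
  ultimately show ?thesis
    by (simp add: rat_linear_def rcop_eq to_T2_add) (simp add: to_T2_def lin_extend_smul)
qed

lemma rat_linear_apply_first: "rat_linear (apply_first g)"
proof -
  have "apply_first g = lin_extend (\<lambda>L. tens (g (Poly_Mapping.single (hd L) 1)) (Poly_Mapping.single (tl L) 1))"
    by (rule ext) (simp add: apply_first_def lin_extend_def)
  then show ?thesis by (simp add: rat_linear_lin_extend)
qed

lemma rat_linear_rcop_it: "rat_linear (rcop_it k)"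
proof (induction k)
  case 0
  show ?case
    unfolding rat_linear_def
    by (simp add: eta_def eps_def embed_conv_lin_extend lin_extend_add lin_extend_smul
        lin_extend_diff lookup_add single_add smul_add smul_diff algebra_simps)
next
  case (Suc k)
  show ?case
  proof (cases k)
    case (Suc j)
    have "rcop_it (Suc k) = (\<lambda>x. apply_first (rcop_it k) (rcop x))"
      using Suc by (simp add: fun_eq_iff)
    then show ?thesis
      using rat_linear_comp[OF rat_linear_apply_first rat_linear_rcop] by simp
  qed (simp add: rat_linear_rcop)
qed

lemma rat_linear_Fmap: "rat_linear (Fmap i)"
proof -
  have "Fmap i = lin_extend (\<lambda>L. if length L = i then itop (map (\<lambda>F. Poly_Mapping.single F 1) L) else 0)"
    unfolding Fmap_def lin_extend_def by (intro ext sum.cong) auto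
  then show ?thesis by (simp add: rat_linear_lin_extend)
qed

lemma apply_first_tens_embed:
  assumes "rat_linear g"
  shows "apply_first g (tens (embed x) (embed q)) = tens (g x) (embed q)"
proof -
  have "apply_first g (tens (embed x) (embed q)) = lin_extend (\<lambda>a. tens (g (Poly_Mapping.single a 1)) (embed q)) x"
    by (simp add: apply_first_def embed_conv_lin_extend tens_lin_extend_left tens_lin_extend_right
        lin_extend_lin_extend flip: lin_extend_def) (rule lin_extend_swap[symmetric])
  also have "\<dots> = tens (g x) (embed q)"
    by (subst rat_linear_conv_lin_extend[OF assms, of x]) (simp add: tens_lin_extend_left)
  finally show ?thesis .
qed

lemma rat_linear_apply_last: "rat_linear (apply_last G)"
  by (simp add: apply_last_def rat_linear_lin_extend)

lemma apply_last_tens_single: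
  "apply_last G (tens w (Poly_Mapping.single [B] 1)) = tens w (embed (G (Poly_Mapping.single B 1)))"
  by (simp add: tens_conv_lin_extend apply_last_def lin_extend_lin_extend)

lemma apply_first_apply_last:
  assumes "rat_linear g"
  shows "apply_first g (apply_last G (to_T2 Y)) = apply_last G (apply_first g (to_T2 Y))"
proof -
  have "apply_first g (apply_last G (to_T2 Y)) =
      lin_extend (\<lambda>k. tens (g (Poly_Mapping.single (fst k) 1)) (embed (G (Poly_Mapping.single (snd k) 1)))) Y"
    using apply_first_tens_embed[OF assms, of "Poly_Mapping.single _ 1"]
    by (simp add: apply_last_to_T2 to_T2_lin_extend rat_linear_lin_extend_app[OF rat_linear_apply_first]
        to_T2_tensor2)
  also have "\<dots> = apply_last G (lin_extend (\<lambda>k. tens (g (Poly_Mapping.single (fst k) 1)) (Poly_Mapping.single [snd k] 1)) Y)"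
    by (simp add: rat_linear_lin_extend_app[OF rat_linear_apply_last] apply_last_tens_single)
  also have "lin_extend (\<lambda>k. tens (g (Poly_Mapping.single (fst k) 1)) (Poly_Mapping.single [snd k] 1)) Y =
      apply_first g (to_T2 Y)"
    by (simp add: to_T2_def apply_first_def lin_extend_lin_extend flip: lin_extend_def)
  finally show ?thesis .
qed

lemma rcop_it_top:
  assumes "p \<in> Prim" "eps x = 0"
  shows "rcop_it (Suc k) (top x p) = tens (rcop_it k x) (embed p) + apply_last (\<lambda>z. top z p) (rcop_it (Suc k) x)"
proof (cases k)
  case 0
  then show ?thesis using assms by (simp add: rcop_top eta_def)
next
  case (Suc j)
  have rcop_x: "rcop x = to_T2 (Delta x - tensor2 1 x - tensor2 x 1)" by (rule rcop_eq)
  have "rcop_it (Suc k) (top x p) = apply_first (rcop_it k) (tens (embed x) (embed p)) +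
      apply_first (rcop_it k) (apply_last (\<lambda>z. top z p) (rcop x))"
    using Suc by (simp add: rcop_top[OF assms(1)] rat_linear_add[OF rat_linear_apply_first])
  also have "\<dots> = tens (rcop_it k x) (embed p) + apply_last (\<lambda>z. top z p) (rcop_it (Suc k) x)"
    using Suc by (simp only: apply_first_tens_embed[OF rat_linear_rcop_it] rcop_x
        apply_first_apply_last[OF rat_linear_rcop_it] rcop_it.simps)
  finally show ?thesis .
qed

lemma itop_snoc: "qs \<noteq> [] \<Longrightarrow> itop (qs @ [p]) = top (itop qs) p"
  by (cases qs) simp_all

lemma eps_itop: "ps \<noteq> [] \<Longrightarrow> set ps \<subseteq> Prim \<Longrightarrow> eps (itop ps) = 0"
proof (induction ps rule: rev_induct)
  case (snoc p qs)
  then show ?case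
    by (cases "qs = []") (simp_all add: eps_Prim itop_snoc eps_top)
qed simp

definition tensor_length :: "nat \<Rightarrow> T \<Rightarrow> bool" where
  "tensor_length n w \<longleftrightarrow> (\<forall>L\<in>Poly_Mapping.keys w. length L = n)"

lemma tensor_length_tens: "tensor_length a x \<Longrightarrow> tensor_length b y \<Longrightarrow> tensor_length (a + b) (tens x y)"
  unfolding tensor_length_def tens_conv_lin_extend
  using keys_lin_extend[of "\<lambda>u. lin_extend (\<lambda>v. Poly_Mapping.single (u @ v) 1) y" x]
    keys_lin_extend[of "\<lambda>v. Poly_Mapping.single (_ @ v) 1" y]
  by fastforce

lemma tensor_length_embed: "tensor_length 1 (embed x)"
  unfolding tensor_length_def embed_conv_lin_extend using keys_lin_extend[of _ x] by fastforce

lemma tensor_length_tensor_list: "tensor_length (length ps) (tensor_list ps)"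
proof (induction ps)
  case (Cons p ps)
  then show ?case using tensor_length_tens[OF tensor_length_embed Cons] by simp
qed (simp add: tensor_length_def)

lemma Fmap_single:
  "Fmap m (Poly_Mapping.single L 1) = (if length L = m then itop (map (\<lambda>F. Poly_Mapping.single F 1) L) else 0)"
  by (simp add: Fmap_def)

lemma Fmap_tens_embed:
  assumes "tensor_length n w" "n \<ge> 1"
  shows "Fmap (Suc n) (tens w (embed p)) = top (Fmap n w) p"
proof -
  have "Fmap (Suc n) (tens w (embed p)) =
      lin_extend (\<lambda>u. lin_extend (\<lambda>F. Fmap (Suc n) (Poly_Mapping.single (u @ [F]) 1)) p) w"
    by (simp add: tens_conv_lin_extend embed_conv_lin_extend lin_extend_lin_extend
        rat_linear_lin_extend_app[OF rat_linear_Fmap])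
  also have "\<dots> = lin_extend (\<lambda>u. top (itop (map (\<lambda>F. Poly_Mapping.single F 1) u)) p) w"
  proof (rule lin_extend_cong)
    fix u assume "u \<in> Poly_Mapping.keys w"
    then have "length u = n" "u \<noteq> []" using assms by (auto simp: tensor_length_def)
    then show "lin_extend (\<lambda>F. Fmap (Suc n) (Poly_Mapping.single (u @ [F]) 1)) p =
        top (itop (map (\<lambda>F. Poly_Mapping.single F 1) u)) p"
      using top_lin_extend_right[of "itop (map (\<lambda>F. Poly_Mapping.single F 1) u)" "\<lambda>F. Poly_Mapping.single F 1" p]
      by (simp add: Fmap_single itop_snoc)
  qed
  also have "\<dots> = top (Fmap n w) p"
  proof -
    have "Fmap n w = lin_extend (\<lambda>u. itop (map (\<lambda>F. Poly_Mapping.single F 1) u)) w"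
      using assms(1) by (subst rat_linear_conv_lin_extend[OF rat_linear_Fmap])
        (auto simp: Fmap_single tensor_length_def intro: lin_extend_cong)
    then show ?thesis by (simp add: top_lin_extend_left)
  qed
  finally show ?thesis .
qed

lemma Fmap_tensor_list: "ps \<noteq> [] \<Longrightarrow> Fmap (length ps) (tensor_list ps) = itop ps"
proof (induction ps rule: rev_induct)
  case (snoc p qs)
  show ?case
  proof (cases "qs = []")
    case True
    have "Fmap 1 (embed p) = p"
      by (simp add: embed_conv_lin_extend rat_linear_lin_extend_app[OF rat_linear_Fmap] Fmap_single)
    with True show ?thesis by (simp add: tens_Nil_right)
  next
    case False
    then have "length qs \<ge> 1" by (cases qs) auto
    with snoc False show ?thesis
      by (simp add: tensor_list_snoc Fmap_tens_embed tensor_length_tensor_list itop_snoc)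
  qed
qed simp

lemma rcop_it_Prim:
  assumes "p \<in> Prim"
  shows "rcop_it 0 p = tensor_list [p]" and "k \<ge> 1 \<Longrightarrow> rcop_it k p = 0"
proof -
  show "rcop_it 0 p = tensor_list [p]"
    using eps_Prim[OF assms] by (simp add: eta_def tens_Nil_right)
  have "rcop p = 0" using assms by (simp add: Prim_def)
  moreover have "apply_first g 0 = 0" for g
    by (rule rat_linear_zero[OF rat_linear_apply_first])
  ultimately show "rcop_it k p = 0" if "k \<ge> 1"
  proof -
    obtain j where "k = Suc j" using \<open>k \<ge> 1\<close> by (cases k) auto
    with \<open>rcop p = 0\<close> \<open>apply_first _ 0 = 0\<close> show ?thesis by (cases j) simp_all
  qed
qed

lemma rcop_it_itop:
  assumes "ps \<noteq> []" "set ps \<subseteq> Prim"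
  shows "rcop_it (length ps - 1) (itop ps) = tensor_list ps \<and> (\<forall>k\<ge>length ps. rcop_it k (itop ps) = 0)"
  using assms
proof (induction ps rule: rev_induct)
  case (snoc p qs)
  then have p: "p \<in> Prim" by simp
  show ?case
  proof (cases "qs = []")
    case True
    then show ?thesis using rcop_it_Prim[OF p] by simp
  next
    case False
    define n where "n = length qs"
    have n: "n \<ge> 1" using False by (cases qs) (auto simp: n_def)
    have IH: "rcop_it (n - 1) (itop qs) = tensor_list qs" "\<And>k. k \<ge> n \<Longrightarrow> rcop_it k (itop qs) = 0"
      using snoc False by (auto simp: n_def)
    have eps: "eps (itop qs) = 0" using eps_itop[OF False] snoc by simp
    have apply_last_zero: "apply_last G 0 = 0" for G
      by (rule rat_linear_zero[OF rat_linear_apply_last])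
    have "rcop_it n (itop (qs @ [p])) = tensor_list (qs @ [p])"
      using rcop_it_top[OF p eps, of "n - 1"] n IH
      by (simp add: itop_snoc False apply_last_zero tensor_list_snoc)
    moreover have "rcop_it k (itop (qs @ [p])) = 0" if k: "k \<ge> Suc n" for k
    proof -
      obtain j where j: "k = Suc j" "j \<ge> n" using k by (cases k) auto
      then show ?thesis
        using rcop_it_top[OF p eps, of j] IH(2)[of j] IH(2)[of k]
        by (simp add: itop_snoc False apply_last_zero tens_conv_lin_extend)
    qed
    ultimately show ?thesis by (simp add: n_def)
  qed
qed simp

lemma primT_rat_linear_eq:
  assumes "rat_linear g" "rat_linear h" "w \<in> primT i"
    and "\<And>ps. length ps = i \<Longrightarrow> set ps \<subseteq> Prim \<Longrightarrow> g (tensor_list ps) = h (tensor_list ps)"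
  shows "g w = h w"
proof -
  have "\<exists>(n::nat) c v. w = (\<Sum>j<n. smul (c j) (v j)) \<and>
      (\<forall>j<n. \<exists>ps. v j = tensor_list ps \<and> length ps = i \<and> set ps \<subseteq> Prim)"
    using assms(3) unfolding primT_def qspan_def by simp
  then obtain n c v where w: "w = (\<Sum>j<(n::nat). smul (c j) (v j))"
    and v: "\<forall>j<n. \<exists>ps. v j = tensor_list ps \<and> length ps = i \<and> set ps \<subseteq> Prim"
    by blast
  have "g (v j) = h (v j)" if "j < n" for j
  proof -
    obtain ps where "v j = tensor_list ps" "length ps = i" "set ps \<subseteq> Prim"
      using v \<open>j < n\<close> by blast
    then show ?thesis by (simp add: assms(4))
  qed
  then show ?thesis
    by (simp add: w rat_linear_sum[OF assms(1)] rat_linear_sum[OF assms(2)] rat_linear_smul[OF assms(1)]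
        rat_linear_smul[OF assms(2)])
qed

lemma rcop_it_Fmap_primT:
  assumes "i \<ge> 1" "w \<in> primT i"
  shows "rcop_it (i - 1) (Fmap i w) = w"
proof (rule primT_rat_linear_eq[OF _ _ assms(2)])
  show "rat_linear (\<lambda>w. rcop_it (i - 1) (Fmap i w))"
    by (rule rat_linear_comp[OF rat_linear_rcop_it rat_linear_Fmap])
  show "rat_linear (\<lambda>w. w)" by (simp add: rat_linear_def)
  fix ps assume ps: "length ps = i" "set ps \<subseteq> Prim"
  with assms(1) have "ps \<noteq> []" by auto
  with ps show "rcop_it (i - 1) (Fmap i (tensor_list ps)) = tensor_list ps"
    using rcop_it_itop[of ps] Fmap_tensor_list[of ps] by simp
qed

lemma rcop_it_Fmap_primT_vanish:
  assumes "i \<ge> 1" "w \<in> primT i" "k \<ge> i"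
  shows "rcop_it k (Fmap i w) = 0"
proof (rule primT_rat_linear_eq[OF _ _ assms(2)])
  show "rat_linear (\<lambda>w. rcop_it k (Fmap i w))"
    by (rule rat_linear_comp[OF rat_linear_rcop_it rat_linear_Fmap])
  show "rat_linear (\<lambda>w. 0::T)" by (simp add: rat_linear_def)
  fix ps assume ps: "length ps = i" "set ps \<subseteq> Prim"
  with assms(1) have "ps \<noteq> []" by auto
  with ps assms(3) show "rcop_it k (Fmap i (tensor_list ps)) = 0"
    using rcop_it_itop[of ps] Fmap_tensor_list[of ps] by simp
qed

lemma eps_Fmap_primT:
  assumes "i \<ge> 1" "w \<in> primT i"
  shows "eps (Fmap i w) = 0"
proof -
  have "eta (eps (Fmap i w)) = 0"
  proof (rule primT_rat_linear_eq[OF _ _ assms(2)])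
    have "rat_linear (\<lambda>x. eta (eps x))"
      by (simp add: rat_linear_def eta_def eps_def lookup_add single_add)
    then show "rat_linear (\<lambda>w. eta (eps (Fmap i w)))"
      by (rule rat_linear_comp[OF _ rat_linear_Fmap])
    show "rat_linear (\<lambda>w. 0::H)" by (simp add: rat_linear_def)
    fix ps assume ps: "length ps = i" "set ps \<subseteq> Prim"
    with assms(1) have "ps \<noteq> []" by auto
    with ps show "eta (eps (Fmap i (tensor_list ps))) = 0"
      using eps_itop[of ps] Fmap_tensor_list[of ps] by (simp add: eta_def)
  qed
  then have "Poly_Mapping.lookup (eta (eps (Fmap i w))) {#} = 0" by simp
  then show ?thesis by (simp add: eta_def)
qed

lemma Fmap_sum_eq_0_imp_zero:
  assumes "\<forall>j\<in>{1..n}. w j \<in> primT j" "(\<Sum>j=1..n. Fmap j (w j)) = 0"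
  shows "\<forall>j\<in>{1..n}. w j = 0"
  using assms
proof (induction n)
  case (Suc n)
  have prim: "w j \<in> primT j" if "1 \<le> j" "j \<le> Suc n" for j
    using Suc.prems(1) that by simp
  have sum: "(\<Sum>j=1..n. Fmap j (w j)) + Fmap (Suc n) (w (Suc n)) = 0"
    using Suc.prems(2) by simp
  have "rcop_it n (\<Sum>j=1..n. Fmap j (w j)) = (\<Sum>j=1..n. rcop_it n (Fmap j (w j)))"
    by (rule rat_linear_sum[OF rat_linear_rcop_it])
  also have "\<dots> = 0"
    by (intro sum.neutral ballI rcop_it_Fmap_primT_vanish prim) auto
  finally have lower: "rcop_it n (\<Sum>j=1..n. Fmap j (w j)) = 0" .
  have top: "rcop_it n (Fmap (Suc n) (w (Suc n))) = w (Suc n)"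
    using rcop_it_Fmap_primT[of "Suc n"] prim[of "Suc n"] by simp
  have "rcop_it n ((\<Sum>j=1..n. Fmap j (w j)) + Fmap (Suc n) (w (Suc n))) = 0"
    unfolding sum by (rule rat_linear_zero[OF rat_linear_rcop_it])
  with lower top have last: "w (Suc n) = 0"
    by (simp add: rat_linear_add[OF rat_linear_rcop_it])
  with sum have "(\<Sum>j=1..n. Fmap j (w j)) = 0"
    by (simp add: rat_linear_zero[OF rat_linear_Fmap])
  with Suc.IH prim have "\<forall>j\<in>{1..n}. w j = 0"
    by simp
  with last show ?case
    by (simp add: atLeastAtMostSuc_conv)
qed simp

theorem lemma4p4:
  fixes i :: nat
  assumes "i \<ge> 1"
  shows "(\<forall>w\<in>primT i. rcop_it (i - 1) (Fmap i w) = w)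
    \<and> (\<forall>k. k > i - 1 \<longrightarrow> (\<forall>w\<in>primT i. rcop_it k (Fmap i w) = 0))
    \<and> inj_on (Fmap i) (primT i)
    \<and> (\<forall>(n::nat) (c::rat) (w::nat \<Rightarrow> T).
          (\<forall>j\<in>{1..n}. w j \<in> primT j) \<and> eta c + (\<Sum>j=1..n. Fmap j (w j)) = 0
          \<longrightarrow> c = 0 \<and> (\<forall>j\<in>{1..n}. Fmap j (w j) = 0))"
proof -
  have left_inverse: "\<forall>w\<in>primT i. rcop_it (i - 1) (Fmap i w) = w"
    using rcop_it_Fmap_primT assms by blast
  moreover have "\<forall>k. k > i - 1 \<longrightarrow> (\<forall>w\<in>primT i. rcop_it k (Fmap i w) = 0)"
    using rcop_it_Fmap_primT_vanish assms by auto
  moreover have "inj_on (Fmap i) (primT i)"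
    using left_inverse by (metis inj_onI)
  moreover have "c = 0 \<and> (\<forall>j\<in>{1..n}. Fmap j (w j) = 0)"
    if prim: "\<forall>j\<in>{1..n}. w j \<in> primT j" and sum: "eta c + (\<Sum>j=1..n. Fmap j (w j)) = 0" for n c w
  proof -
    have "eps (eta c + (\<Sum>j=1..n. Fmap j (w j))) = c"
      using prim eps_Fmap_primT by (simp add: eps_def eta_def lookup_add lookup_sum)
    with sum have "c = 0" by (simp add: eps_def)
    with sum prim have "\<forall>j\<in>{1..n}. w j = 0"
      by (intro Fmap_sum_eq_0_imp_zero) (simp_all add: eta_def)
    with \<open>c = 0\<close> show ?thesis
      by (simp add: rat_linear_zero[OF rat_linear_Fmap])
  qed
  ultimately show ?thesis by blast
qed

end
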